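(* (i) If $f:[a,b]\to\mathbb{R}_{\mathcal F}$ is strongly measurable, then $F:[a,b]\to[0,\infty)$, $F(x)=D(\tilde0,f(x))$, is Lebesgue measurable on $[a,b]$. (ii) Let $1\le p<\infty$. For any $f,g\in L^p([a,b];\mathbb{R}_{\mathcal F})$, the function $F(x)=D(f(x),g(x))$ is Lebesgue measurable and $\int_a^bF(x)^pdx<\infty$. Moreover, with $$D_p(f,g)=\Big(\int_a^b[D(f(x),g(x))]^pdx\Big)^{1/p},$$ $(L^p([a,b];\mathbb{R}_{\mathcal F}),D_p)$ is a complete metric space (where $f=g$ means $f(x)=g(x)$ for a.e. $x\in[a,b]$), and for all $f,g,h,e\in L^p([a,b];\mathbb{R}_{\mathcal F})$, $\lambda\in\mathbb{R}$: $D_p(f\oplus h,g\oplus h)=D_p(f,g)$, $D_p(\lambda\odot f,\lambda\odot g)=|\lambda|D_p(f,g)$, $D_p(f\oplus g,h\oplus e)\le D_p(f,h)+D_p(g,e)$.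
   Context: A fuzzy number is a function $u:\mathbb{R}\to[0,1]$ which is normal, fuzzy convex ($u(tx+(1-t)y)\ge\min\{u(x),u(y)\}$), upper semicontinuous, and with $\overline{\{x:u(x)>0\}}$ compact; $\mathbb{R}_{\mathcal F}$ is the set of fuzzy numbers. Level sets $[u]^r=\{x:u(x)\ge r\}$ ($r\in(0,1]$), $[u]^0=\overline{\{u>0\}}$, are compact intervals $[u_-(r),u_+(r)]$. Operations: $[u\oplus v]^r=[u]^r+[v]^r$, $[\lambda\odot u]^r=\lambda[u]^r$, $\tilde0=\chi_{\{0\}}$; metric $D(u,v)=\sup_{r\in[0,1]}\max\{|u_-(r)-v_-(r)|,|u_+(r)-v_+(r)|\}$. Operations on functions are pointwise. Writing $[f(x)]^r=[f_-(x)(r),f_+(x)(r)]$, $f:[a,b]\to\mathbb{R}_{\mathcal F}$ is strongly measurable if for each $r\in[0,1]$ the functions $x\mapsto f_-(x)(r)$ and $x\mapsto f_+(x)(r)$ are Lebesgue measurable on $[a,b]$. $L^p([a,b];\mathbb{R}_{\mathcal F})$ is the set of strongly measurable $f$ with $\int_a^b(D(\tilde0,f(x)))^pdx<\infty$. *)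

theory Defs
  imports "HOL-Analysis.Analysis"
begin

definition usc :: "(real \<Rightarrow> real) \<Rightarrow> bool" where
  "usc u \<longleftrightarrow> (\<forall>x. \<forall>e>0. \<exists>d>0. \<forall>y. \<bar>y - x\<bar> < d \<longrightarrow> u y < u x + e)"

definition fuzzy_number :: "(real \<Rightarrow> real) \<Rightarrow> bool" where
  "fuzzy_number u \<longleftrightarrow>
     (\<forall>x. 0 \<le> u x \<and> u x \<le> 1) \<and>
     (\<exists>x. u x = 1) \<and>
     (\<forall>x y t. 0 \<le> t \<and> t \<le> 1 \<longrightarrow> u (t * x + (1 - t) * y) \<ge> min (u x) (u y)) \<and>
     usc u \<and>
     compact (closure {x. u x > 0})"

definition level :: "(real \<Rightarrow> real) \<Rightarrow> real \<Rightarrow> real set" where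
  "level u r = (if r = 0 then closure {x. u x > 0} else {x. u x \<ge> r})"

definition lower :: "(real \<Rightarrow> real) \<Rightarrow> real \<Rightarrow> real" where
  "lower u r = Inf (level u r)"

definition upper :: "(real \<Rightarrow> real) \<Rightarrow> real \<Rightarrow> real" where
  "upper u r = Sup (level u r)"

text \<open>The fuzzy number whose r-level sets (r in (0,1]) are given by L.\<close>
definition fuzzy_of_levels :: "(real \<Rightarrow> real set) \<Rightarrow> (real \<Rightarrow> real)" where
  "fuzzy_of_levels L z = Sup ({0} \<union> {r \<in> {0<..1}. z \<in> L r})"

definition fadd :: "(real \<Rightarrow> real) \<Rightarrow> (real \<Rightarrow> real) \<Rightarrow> (real \<Rightarrow> real)" (infixl "\<oplus>\<^sub>F" 65) where
  "u \<oplus>\<^sub>F v = fuzzy_of_levels (\<lambda>r. {x + y | x y. x \<in> level u r \<and> y \<in> level v r})"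

definition fscale :: "real \<Rightarrow> (real \<Rightarrow> real) \<Rightarrow> (real \<Rightarrow> real)" (infixr "\<odot>\<^sub>F" 75) where
  "c \<odot>\<^sub>F u = fuzzy_of_levels (\<lambda>r. (\<lambda>x. c * x) ` level u r)"

definition fzero :: "real \<Rightarrow> real" where
  "fzero = (\<lambda>x. if x = 0 then 1 else 0)"

definition fdist :: "(real \<Rightarrow> real) \<Rightarrow> (real \<Rightarrow> real) \<Rightarrow> real" where
  "fdist u v = (SUP r\<in>{0..1}. max \<bar>lower u r - lower v r\<bar> \<bar>upper u r - upper v r\<bar>)"

definition ffadd :: "('a \<Rightarrow> real \<Rightarrow> real) \<Rightarrow> ('a \<Rightarrow> real \<Rightarrow> real) \<Rightarrow> ('a \<Rightarrow> real \<Rightarrow> real)" where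
  "ffadd f g = (\<lambda>x. f x \<oplus>\<^sub>F g x)"

definition ffscale :: "real \<Rightarrow> ('a \<Rightarrow> real \<Rightarrow> real) \<Rightarrow> ('a \<Rightarrow> real \<Rightarrow> real)" where
  "ffscale c f = (\<lambda>x. c \<odot>\<^sub>F f x)"

definition strongly_measurable :: "real \<Rightarrow> real \<Rightarrow> (real \<Rightarrow> real \<Rightarrow> real) \<Rightarrow> bool" where
  "strongly_measurable a b f \<longleftrightarrow>
     (\<forall>x\<in>{a..b}. fuzzy_number (f x)) \<and>
     (\<forall>r\<in>{0..1}.
        (\<lambda>x. lower (f x) r) \<in> borel_measurable (restrict_space lebesgue {a..b}) \<and>
        (\<lambda>x. upper (f x) r) \<in> borel_measurable (restrict_space lebesgue {a..b}))"

definition fuzzy_Lp :: "real \<Rightarrow> real \<Rightarrow> real \<Rightarrow> (real \<Rightarrow> real \<Rightarrow> real) set" where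
  "fuzzy_Lp p a b = {f. strongly_measurable a b f \<and>
     (\<integral>\<^sup>+ x\<in>{a..b}. ennreal (fdist fzero (f x) powr p) \<partial>lebesgue) < \<infinity>}"

definition Dp :: "real \<Rightarrow> real \<Rightarrow> real \<Rightarrow> (real \<Rightarrow> real \<Rightarrow> real) \<Rightarrow> (real \<Rightarrow> real \<Rightarrow> real) \<Rightarrow> real" where
  "Dp p a b f g = (LINT x:{a..b}|lebesgue. fdist (f x) (g x) powr p) powr (1 / p)"

end

theory Submission
  imports Defs
begin

text \<open>A fuzzy number is determined by its endpoint functions \<open>r \<mapsto> lower u r\<close>,
  \<open>r \<mapsto> upper u r\<close>; these are exactly the pairs that are monotone, left-continuous on
  \<open>(0, 1]\<close> and right-continuous at \<open>0\<close> (Goetschel--Voxman). Under this correspondence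
  \<open>\<oplus>\<^sub>F\<close> and \<open>\<odot>\<^sub>F\<close> act endpointwise and \<open>fdist\<close> is the uniform distance of endpoint
  functions, so \<open>fdist\<close> is a metric with the stated invariances, and completeness follows
  because uniform limits preserve the four endpoint conditions. Left-continuity lets the
  supremum defining \<open>fdist\<close> run over rational levels only, which makes
  \<open>x \<mapsto> fdist (f x) (g x)\<close> measurable. The \<open>L\<^sup>p\<close> statements then follow the classical
  pattern: Minkowski's inequality for the nonnegative functions \<open>fdist (f x) (g x)\<close>, and the
  Riesz--Fischer argument, where a fast Cauchy subsequence converges almost everywhere by
  Borel--Cantelli and Fatou's lemma controls the limit.\<close>

section \<open>Level sets and endpoint functions\<close>

lemma compact_convex_eq_atLeastAtMost:
  fixes S :: "real set"
  assumes "compact S" "convex S" "S \<noteq> {}"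
  shows "S = {Inf S..Sup S}"
proof -
  obtain a b where "S = {a..b}"
    using assms connected_compact_interval_1 convex_connected by blast
  with assms(3) show ?thesis by simp
qed

lemma usc_closed_superlevel:
  assumes "usc u"
  shows "closed {x. r \<le> u x}"
  unfolding closed_def open_real
proof (intro ballI)
  fix x assume "x \<in> - {x. r \<le> u x}"
  then have "0 < r - u x" by simp
  then obtain d where "d > 0" "\<forall>y. \<bar>y - x\<bar> < d \<longrightarrow> u y < u x + (r - u x)"
    using assms unfolding usc_def by blast
  then show "\<exists>e>0. \<forall>y. \<bar>y - x\<bar> < e \<longrightarrow> y \<in> - {x. r \<le> u x}"
    by (intro exI[of _ d]) (auto simp: not_le)
qed

lemma mono_on_tendsto_at_left:
  fixes f :: "real \<Rightarrow> real"
  assumes mono: "mono_on {a..b} f" and "a < b"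
    and approx: "\<And>c. c < f b \<Longrightarrow> \<exists>s\<in>{a<..<b}. c < f s"
  shows "(f \<longlongrightarrow> f b) (at_left b)"
proof (rule order_tendstoI)
  fix c assume "c < f b"
  then obtain s where s: "s \<in> {a<..<b}" "c < f s" using approx by blast
  have "\<forall>\<^sub>F x in at_left b. x \<in> {s<..<b}"
    using s(1) by (intro eventually_at_left_real) auto
  then show "\<forall>\<^sub>F x in at_left b. c < f x"
  proof (rule eventually_mono)
    fix x assume "x \<in> {s<..<b}"
    then have "f s \<le> f x" by (intro monotone_onD[OF mono]) (use s in auto)
    with s show "c < f x" by linarith
  qed
next
  fix c assume "f b < c"
  show "\<forall>\<^sub>F x in at_left b. f x < c"
    using eventually_at_left_real[OF \<open>a < b\<close>]
  proof (rule eventually_mono)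
    fix x assume "x \<in> {a<..<b}"
    then have "f x \<le> f b" by (intro monotone_onD[OF mono]) auto
    with \<open>f b < c\<close> show "f x < c" by linarith
  qed
qed

lemma mono_on_tendsto_at_right:
  fixes f :: "real \<Rightarrow> real"
  assumes mono: "mono_on {a..b} f" and "a < b"
    and approx: "\<And>c. f a < c \<Longrightarrow> \<exists>s\<in>{a<..b}. f s < c"
  shows "(f \<longlongrightarrow> f a) (at_right a)"
proof (rule order_tendstoI)
  fix c assume "f a < c"
  then obtain s where s: "s \<in> {a<..b}" "f s < c" using approx by blast
  have "\<forall>\<^sub>F x in at_right a. x \<in> {a<..<s}"
    using s(1) by (intro eventually_at_right_real) auto
  then show "\<forall>\<^sub>F x in at_right a. f x < c"
  proof (rule eventually_mono)
    fix x assume "x \<in> {a<..<s}"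
    then have "f x \<le> f s" by (intro monotone_onD[OF mono]) (use s in auto)
    with s show "f x < c" by linarith
  qed
next
  fix c assume "c < f a"
  show "\<forall>\<^sub>F x in at_right a. c < f x"
    using eventually_at_right_real[OF \<open>a < b\<close>]
  proof (rule eventually_mono)
    fix x assume "x \<in> {a<..<b}"
    then have "f a \<le> f x" by (intro monotone_onD[OF mono]) auto
    with \<open>c < f a\<close> show "c < f x" by linarith
  qed
qed

lemma antimono_on_tendsto_at_left:
  fixes f :: "real \<Rightarrow> real"
  assumes "antimono_on {a..b} f" and "a < b"
    and "\<And>c. f b < c \<Longrightarrow> \<exists>s\<in>{a<..<b}. f s < c"
  shows "(f \<longlongrightarrow> f b) (at_left b)"
proof -
  have "mono_on {a..b} (\<lambda>x. - f x)"
    using assms(1) by (auto simp: monotone_on_def)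
  then have "((\<lambda>x. - f x) \<longlongrightarrow> - f b) (at_left b)"
  proof (rule mono_on_tendsto_at_left[OF _ \<open>a < b\<close>])
    fix c assume "c < - f b"
    then obtain s where s: "s \<in> {a<..<b}" "f s < - c" using assms(3)[of "- c"] by auto
    have "c < - f s" using s(2) by linarith
    with s(1) show "\<exists>s\<in>{a<..<b}. c < - f s" by blast
  qed
  then show ?thesis by (simp add: tendsto_minus_cancel_left[symmetric])
qed

lemma antimono_on_tendsto_at_right:
  fixes f :: "real \<Rightarrow> real"
  assumes "antimono_on {a..b} f" and "a < b"
    and "\<And>c. c < f a \<Longrightarrow> \<exists>s\<in>{a<..b}. c < f s"
  shows "(f \<longlongrightarrow> f a) (at_right a)"
proof -
  have "mono_on {a..b} (\<lambda>x. - f x)"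
    using assms(1) by (auto simp: monotone_on_def)
  then have "((\<lambda>x. - f x) \<longlongrightarrow> - f a) (at_right a)"
  proof (rule mono_on_tendsto_at_right[OF _ \<open>a < b\<close>])
    fix c assume "- f a < c"
    then obtain s where s: "s \<in> {a<..b}" "- c < f s" using assms(3)[of "- c"] by auto
    have "- f s < c" using s(2) by linarith
    with s(1) show "\<exists>s\<in>{a<..b}. - f s < c" by blast
  qed
  then show ?thesis by (simp add: tendsto_minus_cancel_left[symmetric])
qed

context
  fixes u :: "real \<Rightarrow> real"
  assumes fuzzy: "fuzzy_number u"
begin

lemma fuzzy_number_nonneg: "0 \<le> u x"
  and fuzzy_number_le_one: "u x \<le> 1"
  using fuzzy unfolding fuzzy_number_def by auto

lemma fuzzy_number_convex_superlevel:
  shows "convex {x. t \<le> u x}" "convex {x. t < u x}"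
proof -
  have quasiconcave: "\<forall>x y t. 0 \<le> t \<and> t \<le> 1 \<longrightarrow> min (u x) (u y) \<le> u (t * x + (1 - t) * y)"
    using fuzzy unfolding fuzzy_number_def by auto
  have min_le: "min (u x) (u y) \<le> u ((1 - s) * x + s * y)" if "0 \<le> s" "s \<le> 1" for x y s
    using quasiconcave[rule_format, of s y x] that by (simp add: min.commute add.commute)
  show "convex {x. t \<le> u x}"
    unfolding convex_alt by (auto intro!: order_trans[OF _ min_le])
  show "convex {x. t < u x}"
    unfolding convex_alt by (auto intro!: less_le_trans[OF _ min_le])
qed

lemma compact_level: "r \<in> {0..1} \<Longrightarrow> compact (level u r)"
proof -
  assume r: "r \<in> {0..1}"
  have support: "compact (closure {x. 0 < u x})"
    using fuzzy unfolding fuzzy_number_def by auto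
  show ?thesis
  proof (cases "r = 0")
    case False
    then have "level u r \<subseteq> closure {x. 0 < u x}"
      using r closure_subset by (fastforce simp: level_def)
    moreover have "closed (level u r)"
      using False fuzzy usc_closed_superlevel by (simp add: level_def fuzzy_number_def)
    ultimately show ?thesis
      using support by (meson compact_eq_bounded_closed bounded_subset)
  qed (use support in \<open>simp add: level_def\<close>)
qed

lemma convex_level: "convex (level u r)"
  using fuzzy_number_convex_superlevel convex_closure by (simp add: level_def)

lemma level_nonempty: "r \<in> {0..1} \<Longrightarrow> level u r \<noteq> {}"
proof -
  assume r: "r \<in> {0..1}"
  obtain x where "u x = 1" using fuzzy unfolding fuzzy_number_def by auto
  then have "x \<in> level u r"
    using r closure_subset[of "{x. 0 < u x}"] by (auto simp: level_def)
  then show ?thesis by blast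
qed

lemma level_eq_atLeastAtMost: "r \<in> {0..1} \<Longrightarrow> level u r = {lower u r..upper u r}"
  unfolding lower_def upper_def
  by (intro compact_convex_eq_atLeastAtMost compact_level convex_level level_nonempty)

lemma lower_le_upper: "r \<in> {0..1} \<Longrightarrow> lower u r \<le> upper u r"
  using level_eq_atLeastAtMost level_nonempty by fastforce

lemma level_antimono:
  assumes "0 \<le> r" "r \<le> s"
  shows "level u s \<subseteq> level u r"
proof (cases "r = 0")
  case True
  have "{x. s \<le> u x} \<subseteq> closure {x. 0 < u x}" if "s \<noteq> 0"
    using that assms closure_subset by fastforce
  with True show ?thesis by (auto simp: level_def)
qed (use assms in \<open>auto simp: level_def\<close>)

lemma mono_on_lower: "mono_on {0..1} (lower u)"
  and antimono_on_upper: "antimono_on {0..1} (upper u)"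
proof -
  have *: "lower u r \<le> lower u s \<and> upper u s \<le> upper u r"
    if "r \<in> {0..1}" "s \<in> {0..1}" "r \<le> s" for r s
  proof -
    have "{lower u s..upper u s} \<subseteq> {lower u r..upper u r}"
      using level_antimono[of r s] that by (simp add: level_eq_atLeastAtMost)
    with lower_le_upper[of s] that show ?thesis by auto
  qed
  show "mono_on {0..1} (lower u)" "antimono_on {0..1} (upper u)"
    by (simp_all add: monotone_on_def *)
qed

lemma mem_level_of_mem_levels_below:
  assumes r: "r \<in> {0<..1}" and below: "\<And>s. s \<in> {0<..<r} \<Longrightarrow> x \<in> level u s"
  shows "x \<in> level u r"
proof -
  have "r \<le> u x"
  proof (rule dense_le_bounded[of 0])
    show "0 < r" using r by simp
    fix w :: real assume "0 < w" "w < r"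
    then have "x \<in> level u w" using below by simp
    then show "w \<le> u x" using \<open>0 < w\<close> by (simp add: level_def)
  qed
  then show ?thesis using r by (simp add: level_def)
qed

lemma level_0_subset:
  assumes "closed C" and "\<And>s. s \<in> {0<..1} \<Longrightarrow> level u s \<subseteq> C"
  shows "level u 0 \<subseteq> C"
proof -
  have "{x. 0 < u x} \<subseteq> C"
  proof
    fix x assume "x \<in> {x. 0 < u x}"
    then have "x \<in> level u (u x)" "u x \<in> {0<..1}"
      using fuzzy_number_le_one by (auto simp: level_def)
    then show "x \<in> C" using assms(2) by blast
  qed
  then show ?thesis using assms(1) by (simp add: level_def closure_minimal)
qed


lemma tendsto_lower_at_left:
  assumes r: "r \<in> {0<..1}"
  shows "(lower u \<longlongrightarrow> lower u r) (at_left r)"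
proof (rule mono_on_tendsto_at_left)
  have r01: "r \<in> {0..1}" using r by simp
  show "mono_on {0..r} (lower u)" by (rule mono_on_subset[OF mono_on_lower]) (use r in auto)
  fix c assume c: "c < lower u r"
  show "\<exists>s\<in>{0<..<r}. c < lower u s"
  proof (rule ccontr)
    assume none: "\<not> ?thesis"
    have "c \<in> level u s" if s: "s \<in> {0<..<r}" for s
    proof -
      have "lower u s \<le> c" using none s by (simp add: not_less)
      moreover have "upper u r \<le> upper u s" using monotone_onD[OF antimono_on_upper, of s r] s r
        by simp
      moreover have "s \<in> {0..1}" using s r by auto
      ultimately show ?thesis using level_eq_atLeastAtMost[of s] lower_le_upper[OF r01] c by auto
    qed
    then have "c \<in> level u r" by (rule mem_level_of_mem_levels_below[OF r])
    with c level_eq_atLeastAtMost[OF r01] show False by auto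
  qed
qed (use r in auto)

lemma tendsto_upper_at_left:
  assumes r: "r \<in> {0<..1}"
  shows "(upper u \<longlongrightarrow> upper u r) (at_left r)"
proof (rule antimono_on_tendsto_at_left)
  have r01: "r \<in> {0..1}" using r by simp
  show "antimono_on {0..r} (upper u)"
    by (rule monotone_on_subset[OF antimono_on_upper]) (use r in auto)
  fix c assume c: "upper u r < c"
  show "\<exists>s\<in>{0<..<r}. upper u s < c"
  proof (rule ccontr)
    assume none: "\<not> ?thesis"
    have "c \<in> level u s" if s: "s \<in> {0<..<r}" for s
    proof -
      have "c \<le> upper u s" using none s by (simp add: not_less)
      moreover have "lower u s \<le> lower u r" using monotone_onD[OF mono_on_lower, of s r] s r by simp
      moreover have "s \<in> {0..1}" using s r by auto
      ultimately show ?thesis using level_eq_atLeastAtMost[of s] lower_le_upper[OF r01] c by auto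
    qed
    then have "c \<in> level u r" by (rule mem_level_of_mem_levels_below[OF r])
    with c level_eq_atLeastAtMost[OF r01] show False by auto
  qed
qed (use r in auto)

lemma tendsto_lower_at_right_0: "(lower u \<longlongrightarrow> lower u 0) (at_right 0)"
proof (rule mono_on_tendsto_at_right[OF mono_on_lower])
  fix c assume c: "lower u 0 < c"
  show "\<exists>s\<in>{0<..1}. lower u s < c"
  proof (rule ccontr)
    assume "\<not> ?thesis"
    then have "level u s \<subseteq> {c..}" if "s \<in> {0<..1}" for s
      using that level_eq_atLeastAtMost[of s] by (auto simp: not_less)
    then have "level u 0 \<subseteq> {c..}" by (intro level_0_subset) auto
    with c level_eq_atLeastAtMost[of 0] lower_le_upper[of 0] show False by auto
  qed
qed simp

lemma tendsto_upper_at_right_0: "(upper u \<longlongrightarrow> upper u 0) (at_right 0)"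
proof (rule antimono_on_tendsto_at_right[OF antimono_on_upper])
  fix c assume c: "c < upper u 0"
  show "\<exists>s\<in>{0<..1}. c < upper u s"
  proof (rule ccontr)
    assume "\<not> ?thesis"
    then have "level u s \<subseteq> {..c}" if "s \<in> {0<..1}" for s
      using that level_eq_atLeastAtMost[of s] by (auto simp: not_less)
    then have "level u 0 \<subseteq> {..c}" by (intro level_0_subset) auto
    with c level_eq_atLeastAtMost[of 0] lower_le_upper[of 0] show False by auto
  qed
qed simp
end

section \<open>Fuzzy numbers from endpoint functions\<close>

definition endpoint_pair :: "(real \<Rightarrow> real) \<Rightarrow> (real \<Rightarrow> real) \<Rightarrow> bool" where
  "endpoint_pair l h \<longleftrightarrow>
     mono_on {0..1} l \<and> antimono_on {0..1} h \<and> (\<forall>r\<in>{0..1}. l r \<le> h r) \<and>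
     (\<forall>r\<in>{0<..1}. (l \<longlongrightarrow> l r) (at_left r) \<and> (h \<longlongrightarrow> h r) (at_left r)) \<and>
     (l \<longlongrightarrow> l 0) (at_right 0) \<and> (h \<longlongrightarrow> h 0) (at_right 0)"

lemma endpoint_pair_lower_upper:
  assumes "fuzzy_number u"
  shows "endpoint_pair (lower u) (upper u)"
  unfolding endpoint_pair_def
  by (intro conjI ballI mono_on_lower antimono_on_upper lower_le_upper tendsto_lower_at_left
      tendsto_upper_at_left tendsto_lower_at_right_0 tendsto_upper_at_right_0 assms)

lemma endpoint_pairD:
  assumes "endpoint_pair l h"
  shows "mono_on {0..1} l" "antimono_on {0..1} h" "r \<in> {0..1} \<Longrightarrow> l r \<le> h r"
    "r \<in> {0<..1} \<Longrightarrow> (l \<longlongrightarrow> l r) (at_left r)" "r \<in> {0<..1} \<Longrightarrow> (h \<longlongrightarrow> h r) (at_left r)"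
    "(l \<longlongrightarrow> l 0) (at_right 0)" "(h \<longlongrightarrow> h 0) (at_right 0)"
  using assms unfolding endpoint_pair_def by blast+

abbreviation fuzzy_of_endpoints :: "(real \<Rightarrow> real) \<Rightarrow> (real \<Rightarrow> real) \<Rightarrow> real \<Rightarrow> real" where
  "fuzzy_of_endpoints l h \<equiv> fuzzy_of_levels (\<lambda>r. {l r..h r})"

context
  fixes l h :: "real \<Rightarrow> real"
  assumes pair: "endpoint_pair l h"
begin

private lemma fuzzy_of_endpoints_eq_Sup:
  "fuzzy_of_endpoints l h z = Sup ({0} \<union> {r \<in> {0<..1}. l r \<le> z \<and> z \<le> h r})"
  by (simp add: fuzzy_of_levels_def)

private lemma bdd_above_endpoint_levels: "bdd_above ({0} \<union> {r \<in> {0<..1}. l r \<le> z \<and> z \<le> h r})"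
  by (rule bdd_aboveI[of _ 1]) auto

lemma fuzzy_of_endpoints_nonneg: "0 \<le> fuzzy_of_endpoints l h z"
  unfolding fuzzy_of_endpoints_eq_Sup by (rule cSup_upper[OF _ bdd_above_endpoint_levels]) simp

lemma fuzzy_of_endpoints_le_one: "fuzzy_of_endpoints l h z \<le> 1"
  unfolding fuzzy_of_endpoints_eq_Sup by (rule cSup_least) auto

lemma fuzzy_of_endpoints_ge_iff:
  assumes r: "r \<in> {0<..1}"
  shows "r \<le> fuzzy_of_endpoints l h z \<longleftrightarrow> l r \<le> z \<and> z \<le> h r"
proof
  assume "l r \<le> z \<and> z \<le> h r"
  then show "r \<le> fuzzy_of_endpoints l h z"
    unfolding fuzzy_of_endpoints_eq_Sup using r
    by (intro cSup_upper[OF _ bdd_above_endpoint_levels]) simp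
next
  assume ge: "r \<le> fuzzy_of_endpoints l h z"
  have "l s \<le> z \<and> z \<le> h s" if s: "s \<in> {0<..<r}" for s
  proof -
    have "s < Sup ({0} \<union> {r \<in> {0<..1}. l r \<le> z \<and> z \<le> h r})"
      using ge s unfolding fuzzy_of_endpoints_eq_Sup by simp
    then obtain t where t: "t \<in> {0<..1}" "l t \<le> z" "z \<le> h t" "s < t"
      using s by (subst (asm) less_cSup_iff[OF _ bdd_above_endpoint_levels]) auto
    have "l s \<le> l t" "h t \<le> h s"
      using s t by (auto intro!: monotone_onD[OF endpoint_pairD(1)[OF pair]]
          monotone_onD[OF endpoint_pairD(2)[OF pair]])
    with t show ?thesis by linarith
  qed
  then have ev: "\<forall>\<^sub>F s in at_left r. l s \<le> z \<and> z \<le> h s"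
    using eventually_at_left_real[of 0 r] r by (auto elim: eventually_mono)
  show "l r \<le> z \<and> z \<le> h r"
  proof
    show "l r \<le> z"
      by (rule tendsto_upperbound[OF endpoint_pairD(4)[OF pair r]])
        (use ev in \<open>auto elim: eventually_mono\<close>)
    show "z \<le> h r"
      by (rule tendsto_lowerbound[OF endpoint_pairD(5)[OF pair r]])
        (use ev in \<open>auto elim: eventually_mono\<close>)
  qed
qed

lemma fuzzy_of_endpoints_pos_iff:
  "0 < fuzzy_of_endpoints l h z \<longleftrightarrow> (\<exists>r\<in>{0<..1}. l r \<le> z \<and> z \<le> h r)"
proof
  assume "0 < fuzzy_of_endpoints l h z"
  then obtain t where "t \<in> {0} \<union> {r \<in> {0<..1}. l r \<le> z \<and> z \<le> h r}" "0 < t"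
    unfolding fuzzy_of_endpoints_eq_Sup
    by (subst (asm) less_cSup_iff[OF _ bdd_above_endpoint_levels]) auto
  then show "\<exists>r\<in>{0<..1}. l r \<le> z \<and> z \<le> h r" by auto
next
  assume "\<exists>r\<in>{0<..1}. l r \<le> z \<and> z \<le> h r"
  then obtain r where "r \<in> {0<..1}" "r \<le> fuzzy_of_endpoints l h z" using fuzzy_of_endpoints_ge_iff
    by blast
  then show "0 < fuzzy_of_endpoints l h z" by simp
qed

text \<open>The support is approximated by the clamped points \<open>max (l s) (min z (h s))\<close>, \<open>s \<rightarrow> 0\<^sup>+\<close>.\<close>

lemma closure_support_fuzzy_of_endpoints: "closure {z. 0 < fuzzy_of_endpoints l h z} = {l 0..h 0}"
proof
  have "{z. 0 < fuzzy_of_endpoints l h z} \<subseteq> {l 0..h 0}"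
  proof
    fix z assume "z \<in> {z. 0 < fuzzy_of_endpoints l h z}"
    then obtain r where "r \<in> {0<..1}" "l r \<le> z" "z \<le> h r"
      using fuzzy_of_endpoints_pos_iff by auto
    moreover have "l 0 \<le> l r" "h r \<le> h 0"
      using calculation(1) by (auto intro!: monotone_onD[OF endpoint_pairD(1)[OF pair]]
          monotone_onD[OF endpoint_pairD(2)[OF pair]])
    ultimately show "z \<in> {l 0..h 0}" by simp
  qed
  then show "closure {z. 0 < fuzzy_of_endpoints l h z} \<subseteq> {l 0..h 0}" by (rule closure_minimal) simp
next
  show "{l 0..h 0} \<subseteq> closure {z. 0 < fuzzy_of_endpoints l h z}"
  proof
    fix z assume z: "z \<in> {l 0..h 0}"
    let ?y = "\<lambda>s. max (l s) (min z (h s))"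
    have "(?y \<longlongrightarrow> max (l 0) (min z (h 0))) (at_right 0)"
      by (intro tendsto_intros endpoint_pairD(6,7)[OF pair])
    then have lim: "(?y \<longlongrightarrow> z) (at_right 0)" using z by simp
    have "\<forall>\<^sub>F s in at_right 0. s \<in> {0<..<1::real}" by (rule eventually_at_right_real) simp
    then have "\<forall>\<^sub>F s in at_right 0. ?y s \<in> closure {z. 0 < fuzzy_of_endpoints l h z}"
    proof (rule eventually_mono)
      fix s :: real assume s: "s \<in> {0<..<1}"
      then have "l s \<le> h s" using endpoint_pairD(3)[OF pair, of s] by simp
      then have "l s \<le> ?y s \<and> ?y s \<le> h s" by simp
      moreover have "s \<in> {0<..1}" using s by simp
      ultimately have "?y s \<in> {z. 0 < fuzzy_of_endpoints l h z}"
        unfolding mem_Collect_eq fuzzy_of_endpoints_pos_iff by (rule bexI)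
      then show "?y s \<in> closure {z. 0 < fuzzy_of_endpoints l h z}"
        by (rule closure_subset[THEN subsetD])
    qed
    then show "z \<in> closure {z. 0 < fuzzy_of_endpoints l h z}"
      by (rule Lim_in_closed_set[OF closed_closure _ _ lim]) simp
  qed
qed

lemma fuzzy_of_endpoints_quasiconcave:
  assumes t: "0 \<le> t" "t \<le> 1"
  shows "min (fuzzy_of_endpoints l h x) (fuzzy_of_endpoints l h y)
    \<le> fuzzy_of_endpoints l h (t * x + (1 - t) * y)"
proof (cases "min (fuzzy_of_endpoints l h x) (fuzzy_of_endpoints l h y) \<le> 0")
  case True then show ?thesis using fuzzy_of_endpoints_nonneg order_trans by blast
next
  case False
  define m where "m = min (fuzzy_of_endpoints l h x) (fuzzy_of_endpoints l h y)"
  have m: "m \<in> {0<..1}" using False fuzzy_of_endpoints_le_one unfolding m_def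
    by (auto simp: min_def)
  have "m \<le> fuzzy_of_endpoints l h x" "m \<le> fuzzy_of_endpoints l h y" unfolding m_def by auto
  then have xy: "l m \<le> x" "x \<le> h m" "l m \<le> y" "y \<le> h m"
    using fuzzy_of_endpoints_ge_iff[OF m] by auto
  have "t * l m + (1 - t) * l m \<le> t * x + (1 - t) * y"
    using xy t by (intro add_mono mult_left_mono) auto
  moreover have "t * x + (1 - t) * y \<le> t * h m + (1 - t) * h m"
    using xy t by (intro add_mono mult_left_mono) auto
  ultimately have "l m \<le> t * x + (1 - t) * y \<and> t * x + (1 - t) * y \<le> h m"
    by (simp add: algebra_simps)
  then show ?thesis using fuzzy_of_endpoints_ge_iff[OF m] unfolding m_def by auto
qed

lemma usc_fuzzy_of_endpoints: "usc (fuzzy_of_endpoints l h)"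
  unfolding usc_def
proof (intro allI impI)
  fix x e :: real assume e: "e > 0"
  show "\<exists>d>0. \<forall>y. \<bar>y - x\<bar> < d \<longrightarrow> fuzzy_of_endpoints l h y < fuzzy_of_endpoints l h x + e"
  proof (cases "1 < fuzzy_of_endpoints l h x + e")
    case True then show ?thesis
      using fuzzy_of_endpoints_le_one by (intro exI[of _ 1]) (auto intro: le_less_trans)
  next
    case False
    define r where "r = fuzzy_of_endpoints l h x + e"
    have r: "r \<in> {0<..1}" using False fuzzy_of_endpoints_nonneg[of x] e unfolding r_def by auto
    have "\<not> (l r \<le> x \<and> x \<le> h r)" using fuzzy_of_endpoints_ge_iff[OF r, of x] e unfolding r_def
      by auto
    then have "0 < max (l r - x) (x - h r)" by auto
    moreover have "fuzzy_of_endpoints l h y < fuzzy_of_endpoints l h x + e"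
      if "\<bar>y - x\<bar> < max (l r - x) (x - h r)" for y
    proof -
      have "\<not> (l r \<le> y \<and> y \<le> h r)" using that by auto
      then show ?thesis using fuzzy_of_endpoints_ge_iff[OF r, of y] unfolding r_def by auto
    qed
    ultimately show ?thesis by blast
  qed
qed

lemma fuzzy_number_fuzzy_of_endpoints: "fuzzy_number (fuzzy_of_endpoints l h)"
  unfolding fuzzy_number_def
proof (intro conjI allI impI)
  show "0 \<le> fuzzy_of_endpoints l h x" "fuzzy_of_endpoints l h x \<le> 1" for x
    using fuzzy_of_endpoints_nonneg fuzzy_of_endpoints_le_one by auto
  have "1 \<le> fuzzy_of_endpoints l h (l 1)"
    using fuzzy_of_endpoints_ge_iff[of 1 "l 1"] endpoint_pairD(3)[OF pair, of 1] by simp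
  then show "\<exists>x. fuzzy_of_endpoints l h x = 1" using fuzzy_of_endpoints_le_one
    by (meson order_antisym)
  show "compact (closure {x. 0 < fuzzy_of_endpoints l h x})"
    unfolding closure_support_fuzzy_of_endpoints by simp
qed (simp_all add: fuzzy_of_endpoints_quasiconcave usc_fuzzy_of_endpoints)

lemma level_fuzzy_of_endpoints: "r \<in> {0..1} \<Longrightarrow> level (fuzzy_of_endpoints l h) r = {l r..h r}"
  using fuzzy_of_endpoints_ge_iff closure_support_fuzzy_of_endpoints by (auto simp: level_def)

lemma lower_fuzzy_of_endpoints: "r \<in> {0..1} \<Longrightarrow> lower (fuzzy_of_endpoints l h) r = l r"
  and upper_fuzzy_of_endpoints: "r \<in> {0..1} \<Longrightarrow> upper (fuzzy_of_endpoints l h) r = h r"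
  using level_fuzzy_of_endpoints endpoint_pairD(3)[OF pair] by (simp_all add: lower_def upper_def)

end

lemma endpoint_pair_add:
  assumes "endpoint_pair l1 h1" "endpoint_pair l2 h2"
  shows "endpoint_pair (\<lambda>r. l1 r + l2 r) (\<lambda>r. h1 r + h2 r)"
  using assms unfolding endpoint_pair_def monotone_on_def
  by (intro conjI ballI allI impI tendsto_add add_mono) (blast | simp)+

lemma endpoint_pair_scale_nonneg:
  assumes "endpoint_pair l h" "0 \<le> c"
  shows "endpoint_pair (\<lambda>r. c * l r) (\<lambda>r. c * h r)"
  using assms unfolding endpoint_pair_def monotone_on_def
  by (intro conjI ballI allI impI tendsto_mult_left mult_left_mono) (blast | simp)+

lemma endpoint_pair_scale_nonpos:
  assumes "endpoint_pair l h" "c \<le> 0"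
  shows "endpoint_pair (\<lambda>r. c * h r) (\<lambda>r. c * l r)"
  using assms unfolding endpoint_pair_def monotone_on_def
  by (intro conjI ballI allI impI tendsto_mult_left mult_left_mono_neg) (blast | simp)+

lemma endpoint_pair_const: "a \<le> b \<Longrightarrow> endpoint_pair (\<lambda>r. a) (\<lambda>r. b)"
  unfolding endpoint_pair_def by (simp add: monotone_on_def)

lemma fuzzy_of_levels_cong:
  "(\<And>r. r \<in> {0<..1} \<Longrightarrow> L r = L' r) \<Longrightarrow> fuzzy_of_levels L = fuzzy_of_levels L'"
  unfolding fuzzy_of_levels_def by (intro ext arg_cong[where f = Sup]) auto

lemma set_plus_atLeastAtMost:
  fixes a b c d :: real
  assumes "a \<le> b" "c \<le> d"
  shows "{x + y | x y. x \<in> {a..b} \<and> y \<in> {c..d}} = {a + c..b + d}"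
proof (intro set_eqI iffI)
  fix z assume "z \<in> {a + c..b + d}"
  define x where "x = min b (max a (z - c))"
  have "x \<in> {a..b}" "z - x \<in> {c..d}" "z = x + (z - x)"
    using assms \<open>z \<in> {a + c..b + d}\<close> unfolding x_def by auto
  then show "z \<in> {x + y | x y. x \<in> {a..b} \<and> y \<in> {c..d}}" by blast
qed auto

context
  fixes u v :: "real \<Rightarrow> real"
  assumes u: "fuzzy_number u" and v: "fuzzy_number v"
begin

lemma fadd_eq_fuzzy_of_endpoints:
  "u \<oplus>\<^sub>F v = fuzzy_of_levels (\<lambda>r. {lower u r + lower v r..upper u r + upper v r})"
  unfolding fadd_def
proof (rule fuzzy_of_levels_cong)
  fix r :: real assume "r \<in> {0<..1}"
  then have r: "r \<in> {0..1}" by simp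
  show "{x + y | x y. x \<in> level u r \<and> y \<in> level v r}
      = {lower u r + lower v r..upper u r + upper v r}"
    unfolding level_eq_atLeastAtMost[OF u r] level_eq_atLeastAtMost[OF v r]
    by (rule set_plus_atLeastAtMost[OF lower_le_upper[OF u r] lower_le_upper[OF v r]])
qed

lemma fuzzy_number_fadd: "fuzzy_number (u \<oplus>\<^sub>F v)"
  and lower_fadd: "r \<in> {0..1} \<Longrightarrow> lower (u \<oplus>\<^sub>F v) r = lower u r + lower v r"
  and upper_fadd: "r \<in> {0..1} \<Longrightarrow> upper (u \<oplus>\<^sub>F v) r = upper u r + upper v r"
  using endpoint_pair_add[OF endpoint_pair_lower_upper[OF u] endpoint_pair_lower_upper[OF v]]
  unfolding fadd_eq_fuzzy_of_endpoints
  by (simp_all add: fuzzy_number_fuzzy_of_endpoints lower_fuzzy_of_endpoints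
      upper_fuzzy_of_endpoints)

end

context
  fixes u :: "real \<Rightarrow> real"
  assumes u: "fuzzy_number u"
begin

lemma fscale_eq_fuzzy_of_endpoints:
  "c \<odot>\<^sub>F u = (if 0 < c then fuzzy_of_levels (\<lambda>r. {c * lower u r..c * upper u r})
                   else fuzzy_of_levels (\<lambda>r. {c * upper u r..c * lower u r}))"
proof -
  have *: "(\<lambda>x. c * x) ` level u r =
      (if 0 < c then {c * lower u r..c * upper u r} else {c * upper u r..c * lower u r})"
    if "r \<in> {0<..1}" for r
    using that level_eq_atLeastAtMost[OF u, of r] lower_le_upper[OF u, of r]
    by (simp add: image_mult_atLeastAtMost_if)
  show ?thesis
  proof (cases "0 < c")
    case True
    then show ?thesis unfolding fscale_def by (simp, intro fuzzy_of_levels_cong) (use * in simp)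
  next
    case False
    then show ?thesis unfolding fscale_def by (simp, intro fuzzy_of_levels_cong) (use * in simp)
  qed
qed

lemma fuzzy_number_fscale: "fuzzy_number (c \<odot>\<^sub>F u)"
  and lower_fscale: "r \<in> {0..1} \<Longrightarrow>
    lower (c \<odot>\<^sub>F u) r = (if 0 < c then c * lower u r else c * upper u r)"
  and upper_fscale: "r \<in> {0..1} \<Longrightarrow>
    upper (c \<odot>\<^sub>F u) r = (if 0 < c then c * upper u r else c * lower u r)"
  using endpoint_pair_scale_nonneg[OF endpoint_pair_lower_upper[OF u], of c]
    endpoint_pair_scale_nonpos[OF endpoint_pair_lower_upper[OF u], of c]
  unfolding fscale_eq_fuzzy_of_endpoints
  by (simp_all add: fuzzy_number_fuzzy_of_endpoints lower_fuzzy_of_endpoints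
      upper_fuzzy_of_endpoints)

end

lemma fzero_eq_fuzzy_of_endpoints: "fzero = fuzzy_of_levels (\<lambda>r. {0..0})"
  by (auto simp: fzero_def fuzzy_of_levels_def intro!: ext cSup_eq_maximum)

lemma fuzzy_number_fzero: "fuzzy_number fzero"
  and lower_fzero: "r \<in> {0..1} \<Longrightarrow> lower fzero r = 0"
  and upper_fzero: "r \<in> {0..1} \<Longrightarrow> upper fzero r = 0"
  using fuzzy_number_fuzzy_of_endpoints[OF endpoint_pair_const[of 0 0]]
    lower_fuzzy_of_endpoints[OF endpoint_pair_const[of 0 0]]
    upper_fuzzy_of_endpoints[OF endpoint_pair_const[of 0 0]]
  unfolding fzero_eq_fuzzy_of_endpoints by simp_all

section \<open>The distance \<open>fdist\<close>\<close>

abbreviation level_dist :: "(real \<Rightarrow> real) \<Rightarrow> (real \<Rightarrow> real) \<Rightarrow> real \<Rightarrow> real" where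
  "level_dist u v r \<equiv> max \<bar>lower u r - lower v r\<bar> \<bar>upper u r - upper v r\<bar>"

lemma fdist_le:
  assumes "\<And>r. r \<in> {0..1} \<Longrightarrow> level_dist u v r \<le> c"
  shows "fdist u v \<le> c"
  unfolding fdist_def by (rule cSUP_least) (use assms in auto)

context
  fixes u v :: "real \<Rightarrow> real"
  assumes u: "fuzzy_number u" and v: "fuzzy_number v"
begin

lemma bdd_above_level_dist: "bdd_above (level_dist u v ` {0..1})"
proof (rule bdd_aboveI2)
  fix r :: real assume r: "r \<in> {0..1}"
  have "lower w 0 \<le> lower w r \<and> lower w r \<le> upper w r \<and> upper w r \<le> upper w 0"
    if "fuzzy_number w" for w
    using r monotone_onD[OF mono_on_lower[OF that], of 0 r]
      monotone_onD[OF antimono_on_upper[OF that], of 0 r] lower_le_upper[OF that r] by auto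
  from this[OF u] this[OF v]
  show "level_dist u v r \<le> \<bar>lower u 0\<bar> + \<bar>upper u 0\<bar> + \<bar>lower v 0\<bar> + \<bar>upper v 0\<bar>"
    by linarith
qed

lemma level_dist_le_fdist: "r \<in> {0..1} \<Longrightarrow> level_dist u v r \<le> fdist u v"
  unfolding fdist_def by (rule cSUP_upper[OF _ bdd_above_level_dist])

lemma dist_lower_le_fdist: "r \<in> {0..1} \<Longrightarrow> dist (lower u r) (lower v r) \<le> fdist u v"
  and dist_upper_le_fdist: "r \<in> {0..1} \<Longrightarrow> dist (upper u r) (upper v r) \<le> fdist u v"
  using level_dist_le_fdist by (auto simp: dist_real_def)

lemma fdist_nonneg: "0 \<le> fdist u v"
proof -
  have "level_dist u v 0 \<le> fdist u v" by (rule level_dist_le_fdist) simp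
  then show ?thesis by (meson abs_ge_zero max.coboundedI1 order_trans)
qed

lemma tendsto_level_dist_at_left: "r \<in> {0<..1} \<Longrightarrow> (level_dist u v \<longlongrightarrow> level_dist u v r) (at_left r)"
  using endpoint_pairD(4,5)[OF endpoint_pair_lower_upper[OF u]]
    endpoint_pairD(4,5)[OF endpoint_pair_lower_upper[OF v]]
  by (intro tendsto_intros) auto

end

lemma fdist_self: "fdist u u = 0"
  unfolding fdist_def by simp

lemma fdist_commute: "fdist u v = fdist v u"
  unfolding fdist_def by (simp add: abs_minus_commute)

lemma fdist_triangle:
  assumes "fuzzy_number u" "fuzzy_number v" "fuzzy_number w"
  shows "fdist u w \<le> fdist u v + fdist v w"
proof (rule fdist_le)
  fix r :: real assume "r \<in> {0..1}"
  then have "level_dist u v r \<le> fdist u v" "level_dist v w r \<le> fdist v w"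
    using level_dist_le_fdist assms by auto
  then show "level_dist u w r \<le> fdist u v + fdist v w" by linarith
qed

lemma fuzzy_number_eqI:
  assumes u: "fuzzy_number u" and v: "fuzzy_number v"
    and levels: "\<And>r. r \<in> {0<..1} \<Longrightarrow> level u r = level v r"
  shows "u = v"
proof
  fix z
  have iff: "r \<le> u z \<longleftrightarrow> r \<le> v z" if "r \<in> {0<..1}" for r
    using levels[OF that] that by (auto simp: level_def set_eq_iff)
  show "u z = v z"
  proof (rule linorder_cases[of "u z" "v z"])
    assume "u z < v z"
    moreover have "v z \<in> {0<..1}"
      using calculation fuzzy_number_nonneg[OF u, of z] fuzzy_number_le_one[OF v, of z] by auto
    ultimately show ?thesis using iff[of "v z"] by simp
  next
    assume "v z < u z"
    moreover have "u z \<in> {0<..1}"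
      using calculation fuzzy_number_nonneg[OF v, of z] fuzzy_number_le_one[OF u, of z] by auto
    ultimately show ?thesis using iff[of "u z"] by simp
  qed
qed

lemma fdist_eq_0_iff:
  assumes u: "fuzzy_number u" and v: "fuzzy_number v"
  shows "fdist u v = 0 \<longleftrightarrow> u = v"
proof
  assume "fdist u v = 0"
  then have "lower u r = lower v r \<and> upper u r = upper v r" if "r \<in> {0..1}" for r
    using level_dist_le_fdist[OF u v that] by simp
  then show "u = v"
    by (intro fuzzy_number_eqI[OF u v])
      (simp add: level_eq_atLeastAtMost[OF u] level_eq_atLeastAtMost[OF v])
qed (simp add: fdist_self)

lemma fdist_fadd_cancel:
  assumes u: "fuzzy_number u" and v: "fuzzy_number v" and w: "fuzzy_number w"
  shows "fdist (u \<oplus>\<^sub>F w) (v \<oplus>\<^sub>F w) = fdist u v"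
  unfolding fdist_def by (rule SUP_cong) (simp_all add: lower_fadd upper_fadd assms)

lemma fdist_fadd_le:
  assumes u: "fuzzy_number u" and v: "fuzzy_number v"
    and w: "fuzzy_number w" and z: "fuzzy_number z"
  shows "fdist (u \<oplus>\<^sub>F v) (w \<oplus>\<^sub>F z) \<le> fdist u w + fdist v z"
proof (rule fdist_le)
  fix r :: real assume r: "r \<in> {0..1}"
  have "level_dist u w r \<le> fdist u w" "level_dist v z r \<le> fdist v z"
    using level_dist_le_fdist assms r by auto
  then show "level_dist (u \<oplus>\<^sub>F v) (w \<oplus>\<^sub>F z) r \<le> fdist u w + fdist v z"
    using r by (simp add: lower_fadd upper_fadd assms, intro conjI; linarith)
qed

lemma level_dist_fscale:
  assumes u: "fuzzy_number u" and v: "fuzzy_number v" and r: "r \<in> {0..1}"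
  shows "level_dist (c \<odot>\<^sub>F u) (c \<odot>\<^sub>F v) r = \<bar>c\<bar> * level_dist u v r"
  using r
  by (simp add: lower_fscale upper_fscale u v right_diff_distrib[symmetric] abs_mult
      max_mult_distrib_left max.commute)

lemma fdist_fscale:
  assumes u: "fuzzy_number u" and v: "fuzzy_number v"
  shows "fdist (c \<odot>\<^sub>F u) (c \<odot>\<^sub>F v) = \<bar>c\<bar> * fdist u v"
proof (rule antisym)
  show "fdist (c \<odot>\<^sub>F u) (c \<odot>\<^sub>F v) \<le> \<bar>c\<bar> * fdist u v"
  proof (rule fdist_le)
    fix r :: real assume r: "r \<in> {0..1}"
    show "level_dist (c \<odot>\<^sub>F u) (c \<odot>\<^sub>F v) r \<le> \<bar>c\<bar> * fdist u v"
      unfolding level_dist_fscale[OF u v r]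
      by (rule mult_left_mono[OF level_dist_le_fdist[OF u v r]]) simp
  qed
  show "\<bar>c\<bar> * fdist u v \<le> fdist (c \<odot>\<^sub>F u) (c \<odot>\<^sub>F v)"
  proof (cases "c = 0")
    case False
    then have c: "0 < \<bar>c\<bar>" by simp
    have "fdist u v \<le> fdist (c \<odot>\<^sub>F u) (c \<odot>\<^sub>F v) / \<bar>c\<bar>"
    proof (rule fdist_le)
      fix r :: real assume r: "r \<in> {0..1}"
      have "\<bar>c\<bar> * level_dist u v r \<le> fdist (c \<odot>\<^sub>F u) (c \<odot>\<^sub>F v)"
        using level_dist_le_fdist[OF fuzzy_number_fscale[OF u, of c]
            fuzzy_number_fscale[OF v, of c] r]
        by (simp add: level_dist_fscale[OF u v r])
      then show "level_dist u v r \<le> fdist (c \<odot>\<^sub>F u) (c \<odot>\<^sub>F v) / \<bar>c\<bar>"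
        by (metis c pos_le_divide_eq mult.commute)
    qed
    then show ?thesis by (metis c pos_le_divide_eq mult.commute)
  qed (simp add: fdist_nonneg fuzzy_number_fscale assms)
qed

lemma cSUP_rationals_eq:
  fixes f :: "real \<Rightarrow> real"
  assumes bdd: "bdd_above (f ` {0..1})"
    and left: "\<And>r. r \<in> {0<..1} \<Longrightarrow> (f \<longlongrightarrow> f r) (at_left r)"
  shows "(SUP r\<in>{0..1}. f r) = (SUP q\<in>{0..1} \<inter> \<rat>. f q)"
proof (rule antisym)
  have bddQ: "bdd_above (f ` ({0..1} \<inter> \<rat>))" by (rule bdd_above_mono[OF bdd]) auto
  show "(SUP r\<in>{0..1}. f r) \<le> (SUP q\<in>{0..1} \<inter> \<rat>. f q)"
  proof (rule cSUP_least)
    fix r :: real assume r: "r \<in> {0..1}"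
    show "f r \<le> (SUP q\<in>{0..1} \<inter> \<rat>. f q)"
    proof (cases "r = 0")
      case True then show ?thesis by (intro cSUP_upper[OF _ bddQ]) auto
    next
      case False
      with r have r': "r \<in> {0<..1}" by simp
      have "f r \<le> (SUP q\<in>{0..1} \<inter> \<rat>. f q) + e" if "e > 0" for e
      proof -
        have "\<forall>\<^sub>F s in at_left r. f r - e < f s"
          using order_tendstoD(1)[OF left[OF r']] \<open>e > 0\<close> by simp
        then obtain b where b: "b < r" "\<And>s. b < s \<Longrightarrow> s < r \<Longrightarrow> f r - e < f s"
          by (auto simp: eventually_at_left_field)
        obtain q where q: "q \<in> \<rat>" "max b 0 < q" "q < r"
          using Rats_dense_in_real[of "max b 0" r] b(1) r' by auto
        then have "f r - e < f q" using b(2) by simp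
        also have "f q \<le> (SUP q\<in>{0..1} \<inter> \<rat>. f q)"
          by (rule cSUP_upper[OF _ bddQ]) (use q r' in auto)
        finally show ?thesis by simp
      qed
      then show ?thesis by (rule field_le_epsilon)
    qed
  qed simp
  show "(SUP q\<in>{0..1} \<inter> \<rat>. f q) \<le> (SUP r\<in>{0..1}. f r)"
  proof (rule cSUP_subset_mono[OF _ bdd])
    have "(0::real) \<in> {0..1} \<inter> \<rat>" by simp
    then show "{0..1::real} \<inter> \<rat> \<noteq> {}" by blast
  qed simp_all
qed

lemma fdist_eq_SUP_rationals:
  assumes "fuzzy_number u" "fuzzy_number v"
  shows "fdist u v = (SUP q\<in>{0..1} \<inter> \<rat>. level_dist u v q)"
  unfolding fdist_def
  by (rule cSUP_rationals_eq[OF bdd_above_level_dist tendsto_level_dist_at_left])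
    (use assms in auto)

section \<open>Minkowski's inequality\<close>

lemma powr_convex_nonneg:
  fixes x y t p :: real
  assumes p: "1 \<le> p" and x: "0 \<le> x" and y: "0 \<le> y" and t: "0 \<le> t" "t \<le> 1"
  shows "(t * x + (1 - t) * y) powr p \<le> t * x powr p + (1 - t) * y powr p"
proof -
  have shrink: "s powr p \<le> s" if "0 \<le> s" "s \<le> 1" for s :: real
    using that p by (cases "s = 0") (auto intro: powr_le_one_le)
  consider "x = 0" | "y = 0" | "0 < x" "0 < y" using x y by linarith
  then show ?thesis
  proof cases
    case 1
    have "((1 - t) * y) powr p = (1 - t) powr p * y powr p" using t y by (simp add: powr_mult)
    also have "\<dots> \<le> (1 - t) * y powr p" using shrink[of "1 - t"] t by (intro mult_right_mono) auto
    finally show ?thesis using 1 by simp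
  next
    case 2
    have "(t * x) powr p = t powr p * x powr p" using t x by (simp add: powr_mult)
    also have "\<dots> \<le> t * x powr p" using shrink[of t] t by (intro mult_right_mono) auto
    finally show ?thesis using 2 by simp
  next
    case 3
    have "(\<lambda>x. x powr p) ((1 - (1 - t)) *\<^sub>R x + (1 - t) *\<^sub>R y)
        \<le> (1 - (1 - t)) * x powr p + (1 - t) * y powr p"
      by (rule convex_onD[OF powr_convex[OF p]]) (use t 3 in auto)
    then show ?thesis by simp
  qed
qed

text \<open>Convexity of \<open>x \<mapsto> x powr p\<close> applied to
  \<open>x + y = (A + B) * (A / (A + B) * (x / A) + B / (A + B) * (y / B))\<close>; with \<open>A\<close>, \<open>B\<close> the
  \<open>p\<close>-norms of two functions this is the heart of Minkowski's inequality.\<close>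

lemma powr_add_le_weighted:
  fixes x y A B p :: real
  assumes p: "1 \<le> p" and x: "0 \<le> x" and y: "0 \<le> y" and A: "0 < A" and B: "0 < B"
  shows "(x + y) powr p
    \<le> (A + B) powr (p - 1) * (A powr (1 - p) * x powr p + B powr (1 - p) * y powr p)"
proof -
  define t where "t = A / (A + B)"
  have t: "0 \<le> t" "t \<le> 1" "1 - t = B / (A + B)" using A B unfolding t_def
    by (auto simp: field_simps)
  have AB: "A + B \<noteq> 0" using A B by simp
  have "(A + B) * (t * (x / A)) = x" "(A + B) * ((1 - t) * (y / B)) = y"
    using A B AB unfolding t(3) unfolding t_def by (simp_all add: field_simps)
  then have "x + y = (A + B) * (t * (x / A) + (1 - t) * (y / B))"
    by (simp add: distrib_left)
  then have "(x + y) powr p = (A + B) powr p * (t * (x / A) + (1 - t) * (y / B)) powr p"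
    by (simp add: powr_mult A B t x y)
  also have "\<dots> \<le> (A + B) powr p * (t * (x / A) powr p + (1 - t) * (y / B) powr p)"
    using A B x y t by (intro mult_left_mono powr_convex_nonneg p) auto
  also have "\<dots> = (A + B) powr (p - 1) * (A powr (1 - p) * x powr p + B powr (1 - p) * y powr p)"
  proof -
    define a b where "a = A powr (1 - p) * x powr p" and "b = B powr (1 - p) * y powr p"
    have xA: "(x / A) powr p = a / A" and yB: "(y / B) powr p = b / B"
      using A B x y unfolding a_def b_def by (simp_all add: powr_divide powr_diff)
    have pow: "(A + B) powr p = (A + B) powr (p - 1) * (A + B)"
      using A B by (simp add: powr_diff)
    have parts: "(A + B) * (t * (a / A)) = a" "(A + B) * ((1 - t) * (b / B)) = b"
      using A B AB unfolding t(3) unfolding t_def by (simp_all add: field_simps)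
    have "(A + B) powr p * (t * (x / A) powr p + (1 - t) * (y / B) powr p)
        = (A + B) powr (p - 1) * ((A + B) * (t * (a / A)) + (A + B) * ((1 - t) * (b / B)))"
      unfolding xA yB pow by (simp only: mult.assoc distrib_left[of "A + B"])
    also have "\<dots> = (A + B) powr (p - 1) * (a + b)" by (simp only: parts)
    finally show ?thesis unfolding a_def b_def .
  qed
  finally show ?thesis .
qed

context
  fixes M :: "'a measure" and f g h :: "'a \<Rightarrow> real" and p :: real
  assumes p: "1 \<le> p"
    and [measurable]: "f \<in> borel_measurable M" "g \<in> borel_measurable M" "h \<in> borel_measurable M"
    and nonneg: "\<And>x. x \<in> space M \<Longrightarrow> 0 \<le> f x \<and> 0 \<le> g x \<and> 0 \<le> h x"
    and le_add: "\<And>x. x \<in> space M \<Longrightarrow> h x \<le> f x + g x"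
    and f_int: "integrable M (\<lambda>x. f x powr p)" and g_int: "integrable M (\<lambda>x. g x powr p)"
begin

lemma integrable_powr_le_add: "integrable M (\<lambda>x. h x powr p)"
proof (rule Bochner_Integration.integrable_bound)
  show "integrable M (\<lambda>x. 2 powr p * (f x powr p + g x powr p))"
    using f_int g_int by simp
  show "AE x in M. norm (h x powr p) \<le> norm (2 powr p * (f x powr p + g x powr p))"
  proof (intro AE_I2)
    fix x assume x: "x \<in> space M"
    note n = nonneg[OF x] le_add[OF x]
    have "h x powr p \<le> (2 * max (f x) (g x)) powr p"
      using n p by (intro powr_mono2) auto
    also have "\<dots> = 2 powr p * max (f x) (g x) powr p" using n by (simp add: powr_mult)
    also have "max (f x) (g x) powr p \<le> f x powr p + g x powr p"
      by (cases "f x \<le> g x") (auto simp: max_def)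
    finally show "norm (h x powr p) \<le> norm (2 powr p * (f x powr p + g x powr p))"
      by simp
  qed
qed measurable

lemma integral_powr_le_if_integral_powr_eq_0:
  assumes "(\<integral>x. f x powr p \<partial>M) = 0"
  shows "(\<integral>x. h x powr p \<partial>M) \<le> (\<integral>x. g x powr p \<partial>M)"
proof (rule integral_mono_AE[OF integrable_powr_le_add g_int])
  have "AE x in M. f x powr p = 0"
    using assms integral_nonneg_eq_0_iff_AE[OF f_int] by (auto intro!: AE_I2)
  then show "AE x in M. h x powr p \<le> g x powr p"
  proof (rule AE_mp, intro AE_I2 impI)
    fix x assume x: "x \<in> space M" and "f x powr p = 0"
    then have "f x = 0" by simp
    then show "h x powr p \<le> g x powr p"
      using nonneg[OF x] le_add[OF x] p by (intro powr_mono2) auto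
  qed
qed

lemma integral_powr_le_sum_roots:
  assumes f_pos: "0 < (\<integral>x. f x powr p \<partial>M)" and g_pos: "0 < (\<integral>x. g x powr p \<partial>M)"
  shows "(\<integral>x. h x powr p \<partial>M)
    \<le> ((\<integral>x. f x powr p \<partial>M) powr (1/p) + (\<integral>x. g x powr p \<partial>M) powr (1/p)) powr p"
proof -
  define A B where "A = (\<integral>x. f x powr p \<partial>M) powr (1/p)" and "B = (\<integral>x. g x powr p \<partial>M) powr (1/p)"
  have A: "0 < A" "A powr p = (\<integral>x. f x powr p \<partial>M)" and B: "0 < B" "B powr p = (\<integral>x. g x powr p \<partial>M)"
    using f_pos g_pos p unfolding A_def B_def by (auto simp: powr_powr)
  have "(\<integral>x. h x powr p \<partial>M)
      \<le> (\<integral>x. (A + B) powr (p - 1) * (A powr (1 - p) * f x powr p + B powr (1 - p) * g x powr p) \<partial>M)"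
  proof (rule integral_mono[OF integrable_powr_le_add])
    show "integrable M
        (\<lambda>x. (A + B) powr (p - 1) * (A powr (1 - p) * f x powr p + B powr (1 - p) * g x powr p))"
      using f_int g_int by simp
    fix x assume x: "x \<in> space M"
    have "h x powr p \<le> (f x + g x) powr p"
      using nonneg[OF x] le_add[OF x] p by (intro powr_mono2) auto
    also have "\<dots>
        \<le> (A + B) powr (p - 1) * (A powr (1 - p) * f x powr p + B powr (1 - p) * g x powr p)"
      using nonneg[OF x] A B by (intro powr_add_le_weighted p) auto
    finally show "h x powr p \<le> \<dots>" .
  qed
  also have "\<dots> = (A + B) powr (p - 1) * (A powr (1 - p) * A powr p + B powr (1 - p) * B powr p)"
    unfolding A(2) B(2) using f_int g_int by simp
  also have "\<dots> = (A + B) powr (p - 1) * (A + B)"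
    using powr_add[of A "1 - p" p, symmetric] powr_add[of B "1 - p" p, symmetric] A(1) B(1) by simp
  also have "\<dots> = (A + B) powr p"
    using powr_mult_base[of "A + B" "p - 1"] A(1) B(1) by (simp add: mult.commute)
  finally show ?thesis unfolding A_def B_def .
qed

end

lemma Minkowski_powr:
  fixes M :: "'a measure" and f g h :: "'a \<Rightarrow> real"
  assumes p: "1 \<le> p"
    and [measurable]: "f \<in> borel_measurable M" "g \<in> borel_measurable M" "h \<in> borel_measurable M"
    and nonneg: "\<And>x. x \<in> space M \<Longrightarrow> 0 \<le> f x \<and> 0 \<le> g x \<and> 0 \<le> h x"
    and le_add: "\<And>x. x \<in> space M \<Longrightarrow> h x \<le> f x + g x"
    and f_int: "integrable M (\<lambda>x. f x powr p)" and g_int: "integrable M (\<lambda>x. g x powr p)"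
  shows "(\<integral>x. h x powr p \<partial>M) powr (1/p)
    \<le> (\<integral>x. f x powr p \<partial>M) powr (1/p) + (\<integral>x. g x powr p \<partial>M) powr (1/p)"
proof -
  define If Ig Ih where "If = (\<integral>x. f x powr p \<partial>M)" and "Ig = (\<integral>x. g x powr p \<partial>M)"
    and "Ih = (\<integral>x. h x powr p \<partial>M)"
  have nonneg_int: "0 \<le> If" "0 \<le> Ig" "0 \<le> Ih"
    unfolding If_def Ig_def Ih_def by (auto intro!: integral_nonneg_AE AE_I2)
  have root_mono: "Ih powr (1/p) \<le> I powr (1/p)" if "Ih \<le> I" for I
    using that nonneg_int p by (intro powr_mono2) auto
  consider "If = 0" | "Ig = 0" | "0 < If" "0 < Ig" using nonneg_int by linarith
  then have "Ih powr (1/p) \<le> If powr (1/p) + Ig powr (1/p)"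
  proof cases
    case 1
    have "Ih \<le> Ig"
      using integral_powr_le_if_integral_powr_eq_0[OF assms] 1 unfolding Ih_def Ig_def If_def
      by blast
    then show ?thesis using root_mono 1 by simp
  next
    case 2
    have "h x \<le> g x + f x" if "x \<in> space M" for x using le_add[OF that] by simp
    then have "Ih \<le> If" using 2 nonneg f_int g_int
      unfolding Ih_def If_def Ig_def by (intro integral_powr_le_if_integral_powr_eq_0[OF p]) auto
    then show ?thesis using root_mono 2 by simp
  next
    case 3
    have "Ih \<le> (If powr (1/p) + Ig powr (1/p)) powr p"
      using integral_powr_le_sum_roots[OF assms] 3 unfolding If_def Ig_def Ih_def by blast
    then have "Ih powr (1/p) \<le> ((If powr (1/p) + Ig powr (1/p)) powr p) powr (1/p)"
      by (rule root_mono)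
    also have "\<dots> = If powr (1/p) + Ig powr (1/p)" using p by (simp add: powr_powr)
    finally show ?thesis .
  qed
  then show ?thesis unfolding If_def Ig_def Ih_def .
qed

section \<open>Measurability and the space \<open>fuzzy_Lp\<close>\<close>

lemma borel_measurable_fdist:
  assumes f: "strongly_measurable a b f" and g: "strongly_measurable a b g"
  shows "(\<lambda>x. fdist (f x) (g x)) \<in> borel_measurable (lebesgue_on {a..b})"
proof -
  have fuzzy: "fuzzy_number (f x)" "fuzzy_number (g x)" if "x \<in> space (lebesgue_on {a..b})" for x
    using f g that by (auto simp: strongly_measurable_def)
  have "(\<lambda>x. SUP q\<in>{0..1} \<inter> \<rat>. level_dist (f x) (g x) q) \<in> borel_measurable (lebesgue_on {a..b})"
  proof (rule borel_measurable_cSUP)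
    fix q :: real assume "q \<in> {0..1} \<inter> \<rat>"
    then have [measurable]:
      "(\<lambda>x. lower (f x) q) \<in> borel_measurable (lebesgue_on {a..b})"
      "(\<lambda>x. upper (f x) q) \<in> borel_measurable (lebesgue_on {a..b})"
      "(\<lambda>x. lower (g x) q) \<in> borel_measurable (lebesgue_on {a..b})"
      "(\<lambda>x. upper (g x) q) \<in> borel_measurable (lebesgue_on {a..b})"
      using f g by (auto simp: strongly_measurable_def)
    show "(\<lambda>x. level_dist (f x) (g x) q) \<in> borel_measurable (lebesgue_on {a..b})"
      by measurable
  next
    show "countable ({0..1::real} \<inter> \<rat>)" by (simp add: countable_rat)
  next
    fix x assume x: "x \<in> space (lebesgue_on {a..b})"
    show "bdd_above ((\<lambda>q. level_dist (f x) (g x) q) ` ({0..1} \<inter> \<rat>))"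
      by (rule bdd_above_mono[OF bdd_above_level_dist[OF fuzzy[OF x]]]) auto
  qed
  then show ?thesis
    by (rule measurable_cong[THEN iffD1, rotated]) (simp add: fdist_eq_SUP_rationals fuzzy)
qed

lemma strongly_measurable_imp_fuzzy_number:
  "strongly_measurable a b f \<Longrightarrow> x \<in> {a..b} \<Longrightarrow> fuzzy_number (f x)"
  unfolding strongly_measurable_def by auto

lemma strongly_measurable_const: "fuzzy_number u \<Longrightarrow> strongly_measurable a b (\<lambda>x. u)"
  unfolding strongly_measurable_def by auto

lemma strongly_measurable_ffadd:
  assumes f: "strongly_measurable a b f" and g: "strongly_measurable a b g"
  shows "strongly_measurable a b (ffadd f g)"
  unfolding strongly_measurable_def
proof (intro conjI ballI)
  fix x assume "x \<in> {a..b}"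
  then show "fuzzy_number (ffadd f g x)"
    unfolding ffadd_def
    by (intro fuzzy_number_fadd strongly_measurable_imp_fuzzy_number[OF f]
        strongly_measurable_imp_fuzzy_number[OF g])
next
  fix r :: real assume r: "r \<in> {0..1}"
  then have [measurable]:
    "(\<lambda>x. lower (f x) r) \<in> borel_measurable (lebesgue_on {a..b})"
    "(\<lambda>x. upper (f x) r) \<in> borel_measurable (lebesgue_on {a..b})"
    "(\<lambda>x. lower (g x) r) \<in> borel_measurable (lebesgue_on {a..b})"
    "(\<lambda>x. upper (g x) r) \<in> borel_measurable (lebesgue_on {a..b})"
    using f g by (auto simp: strongly_measurable_def)
  have lower_eq: "x \<in> space (lebesgue_on {a..b}) \<Longrightarrow>
      lower (ffadd f g x) r = lower (f x) r + lower (g x) r"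
    and upper_eq: "x \<in> space (lebesgue_on {a..b}) \<Longrightarrow>
      upper (ffadd f g x) r = upper (f x) r + upper (g x) r" for x
    using r f g
    by (simp_all add: ffadd_def lower_fadd upper_fadd strongly_measurable_imp_fuzzy_number)
  show "(\<lambda>x. lower (ffadd f g x) r) \<in> borel_measurable (lebesgue_on {a..b})"
    by (subst measurable_cong[OF lower_eq]) measurable
  show "(\<lambda>x. upper (ffadd f g x) r) \<in> borel_measurable (lebesgue_on {a..b})"
    by (subst measurable_cong[OF upper_eq]) measurable
qed

lemma nn_integral_on_atLeastAtMost:
  "(\<integral>\<^sup>+ x\<in>{a..b}. F x \<partial>lebesgue) = (\<integral>\<^sup>+ x. F x \<partial>lebesgue_on {a..b::real})"
  by (simp add: nn_integral_restrict_space)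

lemma Dp_eq_integral:
  "Dp p a b f g = (\<integral>x. fdist (f x) (g x) powr p \<partial>lebesgue_on {a..b}) powr (1/p)"
  unfolding Dp_def set_lebesgue_integral_def by (simp add: integral_restrict_space)

lemma integrable_on_iff_nn_integral:
  fixes F :: "real \<Rightarrow> real"
  assumes "F \<in> borel_measurable (lebesgue_on {a..b})" "\<And>x. x \<in> {a..b} \<Longrightarrow> 0 \<le> F x"
  shows "integrable (lebesgue_on {a..b}) F \<longleftrightarrow> (\<integral>\<^sup>+ x\<in>{a..b}. ennreal (F x) \<partial>lebesgue) < \<infinity>"
proof -
  have "(\<integral>\<^sup>+ x. ennreal (norm (F x)) \<partial>lebesgue_on {a..b})
      = (\<integral>\<^sup>+ x. ennreal (F x) \<partial>lebesgue_on {a..b})"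
    by (rule nn_integral_cong) (use assms(2) in simp)
  then show ?thesis
    using assms(1) by (simp add: integrable_iff_bounded nn_integral_on_atLeastAtMost)
qed

lemma fuzzy_Lp_iff:
  "f \<in> fuzzy_Lp p a b \<longleftrightarrow>
     strongly_measurable a b f \<and> integrable (lebesgue_on {a..b}) (\<lambda>x. fdist fzero (f x) powr p)"
proof (cases "strongly_measurable a b f")
  case True
  have "(\<lambda>x. fdist fzero (f x) powr p) \<in> borel_measurable (lebesgue_on {a..b})"
    using borel_measurable_fdist[OF strongly_measurable_const[OF fuzzy_number_fzero] True]
    by measurable
  then have "integrable (lebesgue_on {a..b}) (\<lambda>x. fdist fzero (f x) powr p) \<longleftrightarrow>
      (\<integral>\<^sup>+ x\<in>{a..b}. ennreal (fdist fzero (f x) powr p) \<partial>lebesgue) < \<infinity>"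
    by (rule integrable_on_iff_nn_integral) simp
  with True show ?thesis unfolding fuzzy_Lp_def by simp
qed (simp add: fuzzy_Lp_def)

lemma fuzzy_Lp_imp_strongly_measurable: "f \<in> fuzzy_Lp p a b \<Longrightarrow> strongly_measurable a b f"
  by (simp add: fuzzy_Lp_iff)

context
  fixes p :: real
  assumes p: "1 \<le> p"
begin

lemma integrable_fdist_powr:
  assumes f: "f \<in> fuzzy_Lp p a b" and g: "g \<in> fuzzy_Lp p a b"
  shows "integrable (lebesgue_on {a..b}) (\<lambda>x. fdist (f x) (g x) powr p)"
proof (rule integrable_powr_le_add[OF p])
  have sm: "strongly_measurable a b f" "strongly_measurable a b g"
    "strongly_measurable a b (\<lambda>x. fzero)"
    using f g by (simp_all add: fuzzy_Lp_iff strongly_measurable_const fuzzy_number_fzero)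
  show "(\<lambda>x. fdist (f x) fzero) \<in> borel_measurable (lebesgue_on {a..b})"
    "(\<lambda>x. fdist fzero (g x)) \<in> borel_measurable (lebesgue_on {a..b})"
    "(\<lambda>x. fdist (f x) (g x)) \<in> borel_measurable (lebesgue_on {a..b})"
    by (intro borel_measurable_fdist sm)+
  show "integrable (lebesgue_on {a..b}) (\<lambda>x. fdist (f x) fzero powr p)"
    "integrable (lebesgue_on {a..b}) (\<lambda>x. fdist fzero (g x) powr p)"
    using f g by (simp_all add: fuzzy_Lp_iff fdist_commute[of _ fzero])
  fix x assume "x \<in> space (lebesgue_on {a..b})"
  then have "fuzzy_number (f x)" "fuzzy_number (g x)"
    using f g by (auto simp: fuzzy_Lp_iff intro: strongly_measurable_imp_fuzzy_number)
  then show "0 \<le> fdist (f x) fzero \<and> 0 \<le> fdist fzero (g x) \<and> 0 \<le> fdist (f x) (g x)"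
    and "fdist (f x) (g x) \<le> fdist (f x) fzero + fdist fzero (g x)"
    by (simp_all add: fdist_nonneg fdist_triangle fuzzy_number_fzero)
qed

lemma Dp_le_add:
  assumes u1: "u1 \<in> fuzzy_Lp p a b" and v1: "v1 \<in> fuzzy_Lp p a b"
    and u2: "u2 \<in> fuzzy_Lp p a b" and v2: "v2 \<in> fuzzy_Lp p a b"
    and w1: "strongly_measurable a b w1" and w2: "strongly_measurable a b w2"
    and le: "\<And>x. x \<in> {a..b} \<Longrightarrow> fdist (w1 x) (w2 x) \<le> fdist (u1 x) (v1 x) + fdist (u2 x) (v2 x)"
  shows "Dp p a b w1 w2 \<le> Dp p a b u1 v1 + Dp p a b u2 v2"
  unfolding Dp_eq_integral
proof (rule Minkowski_powr[OF p])
  have sm: "strongly_measurable a b u1" "strongly_measurable a b v1"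
    "strongly_measurable a b u2" "strongly_measurable a b v2"
    using u1 v1 u2 v2 by (simp_all add: fuzzy_Lp_iff)
  show "(\<lambda>x. fdist (u1 x) (v1 x)) \<in> borel_measurable (lebesgue_on {a..b})"
    "(\<lambda>x. fdist (u2 x) (v2 x)) \<in> borel_measurable (lebesgue_on {a..b})"
    "(\<lambda>x. fdist (w1 x) (w2 x)) \<in> borel_measurable (lebesgue_on {a..b})"
    by (intro borel_measurable_fdist sm w1 w2)+
  show "integrable (lebesgue_on {a..b}) (\<lambda>x. fdist (u1 x) (v1 x) powr p)"
    "integrable (lebesgue_on {a..b}) (\<lambda>x. fdist (u2 x) (v2 x) powr p)"
    by (intro integrable_fdist_powr assms)+
  fix x assume "x \<in> space (lebesgue_on {a..b})"
  then have x: "x \<in> {a..b}" by simp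
  have "fuzzy_number (w1 x)" "fuzzy_number (w2 x)" "fuzzy_number (u1 x)" "fuzzy_number (v1 x)"
    "fuzzy_number (u2 x)" "fuzzy_number (v2 x)"
    using assms x by (auto simp: fuzzy_Lp_iff intro: strongly_measurable_imp_fuzzy_number)
  then show "0 \<le> fdist (u1 x) (v1 x) \<and> 0 \<le> fdist (u2 x) (v2 x) \<and> 0 \<le> fdist (w1 x) (w2 x)"
    by (simp add: fdist_nonneg)
  show "fdist (w1 x) (w2 x) \<le> fdist (u1 x) (v1 x) + fdist (u2 x) (v2 x)" by (rule le[OF x])
qed

end

lemma Dp_self: "Dp p a b f f = 0"
  by (simp add: Dp_def fdist_self)

lemma Dp_nonneg: "0 \<le> Dp p a b f g"
  by (simp add: Dp_def)

lemma Dp_commute: "Dp p a b f g = Dp p a b g f"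
  by (simp add: Dp_def fdist_commute)

lemma Dp_ffadd_cancel:
  assumes f: "strongly_measurable a b f" and g: "strongly_measurable a b g"
    and h: "strongly_measurable a b h"
  shows "Dp p a b (ffadd f h) (ffadd g h) = Dp p a b f g"
  unfolding Dp_eq_integral
  by (intro arg_cong[where f = "\<lambda>I. I powr (1/p)"] Bochner_Integration.integral_cong refl)
    (simp add: ffadd_def fdist_fadd_cancel strongly_measurable_imp_fuzzy_number[OF f]
      strongly_measurable_imp_fuzzy_number[OF g] strongly_measurable_imp_fuzzy_number[OF h])

lemma Dp_ffscale:
  assumes p: "0 < p" and f: "strongly_measurable a b f" and g: "strongly_measurable a b g"
  shows "Dp p a b (ffscale c f) (ffscale c g) = \<bar>c\<bar> * Dp p a b f g"
proof -
  let ?I = "\<integral>x. fdist (f x) (g x) powr p \<partial>lebesgue_on {a..b}"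
  have "(\<integral>x. fdist (ffscale c f x) (ffscale c g x) powr p \<partial>lebesgue_on {a..b}) = \<bar>c\<bar> powr p * ?I"
    by (subst integral_mult_right_zero[symmetric], rule Bochner_Integration.integral_cong)
      (simp_all add: ffscale_def fdist_fscale powr_mult strongly_measurable_imp_fuzzy_number[OF f]
        strongly_measurable_imp_fuzzy_number[OF g])
  moreover have "0 \<le> ?I" by (intro integral_nonneg_AE AE_I2) simp
  ultimately show ?thesis
    using p by (simp add: Dp_eq_integral powr_mult powr_powr)
qed

lemma Dp_eq_0_iff:
  assumes p: "1 \<le> p" and f: "f \<in> fuzzy_Lp p a b" and g: "g \<in> fuzzy_Lp p a b"
  shows "Dp p a b f g = 0 \<longleftrightarrow> (AE x in lebesgue. x \<in> {a..b} \<longrightarrow> f x = g x)"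
proof -
  have "Dp p a b f g = 0 \<longleftrightarrow> (\<integral>x. fdist (f x) (g x) powr p \<partial>lebesgue_on {a..b}) = 0"
    unfolding Dp_eq_integral by simp
  also have "\<dots> \<longleftrightarrow> (AE x in lebesgue_on {a..b}. fdist (f x) (g x) powr p = 0)"
    by (rule integral_nonneg_eq_0_iff_AE[OF integrable_fdist_powr[OF p f g]]) simp
  also have "\<dots> \<longleftrightarrow> (AE x in lebesgue_on {a..b}. f x = g x)"
  proof (rule AE_cong)
    fix x assume "x \<in> space (lebesgue_on {a..b})"
    then have "fuzzy_number (f x)" "fuzzy_number (g x)"
      using f g by (auto simp: fuzzy_Lp_iff intro: strongly_measurable_imp_fuzzy_number)
    then show "fdist (f x) (g x) powr p = 0 \<longleftrightarrow> f x = g x" by (simp add: fdist_eq_0_iff)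
  qed
  also have "\<dots> \<longleftrightarrow> (AE x in lebesgue. x \<in> {a..b} \<longrightarrow> f x = g x)"
    by (simp add: AE_restrict_space_iff)
  finally show ?thesis .
qed

section \<open>Completeness\<close>

lemma endpoint_pair_uniform_limit:
  assumes pairs: "\<And>n. endpoint_pair (l n) (h n)"
    and L: "uniform_limit {0..1} l L sequentially" and H: "uniform_limit {0..1} h H sequentially"
  shows "endpoint_pair L H"
proof -
  have lim: "(\<lambda>n. l n r) \<longlonglongrightarrow> L r" "(\<lambda>n. h n r) \<longlonglongrightarrow> H r" if "r \<in> {0..1}" for r
    using tendsto_uniform_limitI[OF L that] tendsto_uniform_limitI[OF H that] by auto
  have "mono_on {0..1} L"
  proof (rule monotone_onI)
    fix r s :: real assume "r \<in> {0..1}" "s \<in> {0..1}" "r \<le> s"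
    then show "L r \<le> L s"
      using monotone_onD[OF endpoint_pairD(1)[OF pairs]] by (intro LIMSEQ_le[OF lim(1) lim(1)]) auto
  qed
  moreover have "antimono_on {0..1} H"
  proof (rule monotone_onI)
    fix r s :: real assume "r \<in> {0..1}" "s \<in> {0..1}" "r \<le> s"
    then show "H s \<le> H r"
      using monotone_onD[OF endpoint_pairD(2)[OF pairs]] by (intro LIMSEQ_le[OF lim(2) lim(2)]) auto
  qed
  moreover have "L r \<le> H r" if "r \<in> {0..1}" for r
    using that endpoint_pairD(3)[OF pairs] by (intro LIMSEQ_le[OF lim(1) lim(2)]) auto
  moreover have "(L \<longlongrightarrow> L r) (at_left r) \<and> (H \<longlongrightarrow> H r) (at_left r)" if r: "r \<in> {0<..1}" for r
  proof -
    have ev: "\<forall>\<^sub>F s in at_left r. s \<in> {0..1}"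
      using eventually_at_left_real[of 0 r] r by (auto elim: eventually_mono)
    have "r \<in> {0..1}" using r by simp
    show ?thesis
      by (intro conjI swap_uniform_limit'[OF _ lim(1)[OF \<open>r \<in> {0..1}\<close>] L ev]
          swap_uniform_limit'[OF _ lim(2)[OF \<open>r \<in> {0..1}\<close>] H ev])
        (simp_all add: endpoint_pairD(4,5)[OF pairs r])
  qed
  moreover have "(L \<longlongrightarrow> L 0) (at_right 0)" "(H \<longlongrightarrow> H 0) (at_right 0)"
  proof -
    have ev: "\<forall>\<^sub>F s in at_right 0. s \<in> {0..1::real}"
      using eventually_at_right_real[of 0 1] by (auto elim: eventually_mono)
    show "(L \<longlongrightarrow> L 0) (at_right 0)"
      by (rule swap_uniform_limit'[OF _ lim(1) L ev]) (simp_all add: endpoint_pairD(6)[OF pairs])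
    show "(H \<longlongrightarrow> H 0) (at_right 0)"
      by (rule swap_uniform_limit'[OF _ lim(2) H ev]) (simp_all add: endpoint_pairD(7)[OF pairs])
  qed
  ultimately show ?thesis unfolding endpoint_pair_def by blast
qed

lemma tendsto_fdist_if_uniform_limit:
  assumes fuzzy: "\<And>k. fuzzy_number (u k)" "fuzzy_number v"
    and L: "uniform_limit {0..1} (\<lambda>k. lower (u k)) (lower v) sequentially"
    and H: "uniform_limit {0..1} (\<lambda>k. upper (u k)) (upper v) sequentially"
  shows "(\<lambda>k. fdist (u k) v) \<longlonglongrightarrow> 0"
proof (rule tendstoI)
  fix e :: real assume "0 < e"
  then have "\<forall>\<^sub>F k in sequentially. \<forall>r\<in>{0..1}. dist (lower (u k) r) (lower v r) < e / 2 \<and>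
      dist (upper (u k) r) (upper v r) < e / 2"
    using uniform_limitD[OF L, of "e / 2"] uniform_limitD[OF H, of "e / 2"]
    by (auto elim: eventually_elim2)
  then show "\<forall>\<^sub>F k in sequentially. dist (fdist (u k) v) 0 < e"
  proof (rule eventually_mono)
    fix k assume close: "\<forall>r\<in>{0..1}. dist (lower (u k) r) (lower v r) < e / 2 \<and>
      dist (upper (u k) r) (upper v r) < e / 2"
    have "fdist (u k) v \<le> e / 2"
    proof (rule fdist_le)
      fix r :: real assume "r \<in> {0..1}"
      then have "\<bar>lower (u k) r - lower v r\<bar> \<le> e / 2" "\<bar>upper (u k) r - upper v r\<bar> \<le> e / 2"
        using close by (auto simp: dist_real_def less_imp_le)
      then show "level_dist (u k) v r \<le> e / 2" by simp
    qed
    then show "dist (fdist (u k) v) 0 < e"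
      using fdist_nonneg[OF fuzzy] \<open>0 < e\<close> by simp
  qed
qed

lemma fuzzy_number_Cauchy_limit:
  assumes fuzzy: "\<And>k. fuzzy_number (u k)"
    and Cauchy: "\<And>e. 0 < e \<Longrightarrow> \<exists>N. \<forall>m\<ge>N. \<forall>n\<ge>N. fdist (u m) (u n) < e"
  shows "\<exists>v. fuzzy_number v \<and> (\<lambda>k. fdist (u k) v) \<longlonglongrightarrow> 0"
proof -
  have uniformly_Cauchy: "uniformly_Cauchy_on {0..1} (\<lambda>k. F (u k))"
    if F_le: "\<And>k j r. r \<in> {0..1} \<Longrightarrow> dist (F (u k) r) (F (u j) r) \<le> fdist (u k) (u j)" for F
    unfolding uniformly_Cauchy_on_def
  proof (intro allI impI)
    fix e :: real assume "0 < e"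
    then obtain N where N: "\<forall>m\<ge>N. \<forall>n\<ge>N. fdist (u m) (u n) < e" using Cauchy by blast
    show "\<exists>M. \<forall>r\<in>{0..1}. \<forall>m\<ge>M. \<forall>n\<ge>M. dist (F (u m) r) (F (u n) r) < e"
      by (intro exI[of _ N] ballI allI impI le_less_trans[OF F_le]) (use N in auto)
  qed
  have "uniformly_Cauchy_on {0..1} (\<lambda>k. lower (u k))"
    by (rule uniformly_Cauchy) (rule dist_lower_le_fdist[OF fuzzy fuzzy])
  then obtain L where L: "uniform_limit {0..1} (\<lambda>k. lower (u k)) L sequentially"
    using Cauchy_uniformly_convergent unfolding uniformly_convergent_on_def by blast
  have "uniformly_Cauchy_on {0..1} (\<lambda>k. upper (u k))"
    by (rule uniformly_Cauchy) (rule dist_upper_le_fdist[OF fuzzy fuzzy])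
  then obtain H where H: "uniform_limit {0..1} (\<lambda>k. upper (u k)) H sequentially"
    using Cauchy_uniformly_convergent unfolding uniformly_convergent_on_def by blast
  have pair: "endpoint_pair L H"
    by (rule endpoint_pair_uniform_limit[OF endpoint_pair_lower_upper[OF fuzzy] L H])
  note v = fuzzy_number_fuzzy_of_endpoints[OF pair] lower_fuzzy_of_endpoints[OF pair]
    upper_fuzzy_of_endpoints[OF pair]
  have "(\<lambda>k. fdist (u k) (fuzzy_of_endpoints L H)) \<longlonglongrightarrow> 0"
  proof (rule tendsto_fdist_if_uniform_limit[OF fuzzy v(1)])
    show "uniform_limit {0..1} (\<lambda>k. lower (u k)) (lower (fuzzy_of_endpoints L H)) sequentially"
      using L
      by (subst uniform_limit_cong[where g = "\<lambda>k. lower (u k)" and i = L]) (simp_all add: v(2))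
    show "uniform_limit {0..1} (\<lambda>k. upper (u k)) (upper (fuzzy_of_endpoints L H)) sequentially"
      using H
      by (subst uniform_limit_cong[where g = "\<lambda>k. upper (u k)" and i = H]) (simp_all add: v(3))
  qed
  with v(1) show ?thesis by blast
qed

lemma fast_subsequence:
  fixes d :: "'b \<Rightarrow> 'b \<Rightarrow> real" and s :: "nat \<Rightarrow> 'b" and t :: "nat \<Rightarrow> real"
  assumes Cauchy: "\<And>e. 0 < e \<Longrightarrow> \<exists>N. \<forall>m\<ge>N. \<forall>n\<ge>N. d (s m) (s n) < e" and t: "\<And>k. 0 < t k"
  obtains \<phi> where "strict_mono \<phi>" "\<And>k n. \<phi> k \<le> n \<Longrightarrow> d (s (\<phi> k)) (s n) < t k"
proof -
  have "\<forall>k. \<exists>N. \<forall>m\<ge>N. \<forall>n\<ge>N. d (s m) (s n) < t k" using Cauchy t by blast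
  then obtain N where N: "\<And>k m n. N k \<le> m \<Longrightarrow> N k \<le> n \<Longrightarrow> d (s m) (s n) < t k" by metis
  define \<phi> where "\<phi> = rec_nat (N 0) (\<lambda>k i. max (Suc i) (N (Suc k)))"
  have \<phi>_Suc: "\<phi> (Suc k) = max (Suc (\<phi> k)) (N (Suc k))" for k by (simp add: \<phi>_def)
  have "strict_mono \<phi>" by (rule strict_mono_Suc_iff[THEN iffD2]) (simp add: \<phi>_Suc less_max_iff_disj)
  moreover have "d (s (\<phi> k)) (s n) < t k" if "\<phi> k \<le> n" for k n
  proof (rule N)
    show "N k \<le> \<phi> k" by (cases k) (simp_all add: \<phi>_def)
    with that show "N k \<le> n" by simp
  qed
  ultimately show ?thesis by (rule that)
qed

lemma AE_eventually_less_geometric: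
  fixes D :: "nat \<Rightarrow> 'a \<Rightarrow> real"
  assumes p: "0 < p" and [measurable]: "\<And>k. D k \<in> borel_measurable M"
    and int: "\<And>k. integrable M (\<lambda>x. D k x powr p)"
    and small: "\<And>k. (\<integral>x. D k x powr p \<partial>M) \<le> (1/2)^k * ((1/2)^k) powr p"
  shows "AE x in M. \<forall>\<^sub>F k in sequentially. D k x < (1/2)^k"
proof -
  define A where "A k = {x \<in> space M. ((1/2)^k) powr p \<le> D k x powr p}" for k
  have [measurable]: "A k \<in> sets M" for k unfolding A_def by measurable
  have emeasure_A: "emeasure M (A k) \<le> ennreal ((1/2)^k)" for k
  proof -
    have "emeasure M (A k) \<le> ennreal ((1 / ((1/2)^k) powr p) * (\<integral>x. D k x powr p \<partial>M))"
      unfolding A_def by (rule integral_Markov_inequality[OF int]) auto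
    also have "\<dots> \<le> ennreal ((1/2)^k)"
      using small[of k] by (intro ennreal_leI) (simp add: field_simps)
    finally show ?thesis .
  qed
  have "summable (\<lambda>k. measure M (A k))"
  proof (rule summable_comparison_test'[OF summable_geometric[of "1/2"]])
    fix k
    have "measure M (A k) \<le> enn2real (ennreal ((1/2)^k))"
      unfolding measure_def by (rule enn2real_mono[OF emeasure_A]) simp
    then show "norm (measure M (A k)) \<le> (1/2)^k" by simp
  qed simp
  moreover have "emeasure M (A k) < \<infinity>" for k
    using emeasure_A[of k] by (simp add: ennreal_less_top order.strict_trans1)
  ultimately have "AE x in M. \<forall>\<^sub>F k in sequentially. x \<in> space M - A k"
    by (intro borel_cantelli_AE1) auto
  then show ?thesis
  proof (rule AE_mp, intro AE_I2 impI)
    fix x assume "\<forall>\<^sub>F k in sequentially. x \<in> space M - A k"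
    then show "\<forall>\<^sub>F k in sequentially. D k x < (1/2)^k"
    proof (elim eventually_mono)
      fix k assume "x \<in> space M - A k"
      then have "\<not> ((1/2)^k) powr p \<le> D k x powr p" unfolding A_def by simp
      then show "D k x < (1/2)^k" using p
        by (meson not_less powr_mono2 less_imp_le zero_le_power zero_le_divide_1_iff
            zero_le_numeral)
    qed
  qed
qed

lemma fdist_Cauchy_if_geometric:
  assumes fuzzy: "\<And>k. fuzzy_number (u k)"
    and steps: "\<forall>\<^sub>F k in sequentially. fdist (u k) (u (Suc k)) < (1/2)^k"
    and e: "0 < e"
  shows "\<exists>N. \<forall>m\<ge>N. \<forall>n\<ge>N. fdist (u m) (u n) < e"
proof -
  obtain K where K: "\<And>k. K \<le> k \<Longrightarrow> fdist (u k) (u (Suc k)) < (1/2)^k"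
    using steps by (auto simp: eventually_sequentially)
  have tail: "fdist (u j) (u (j + n)) \<le> 2 * (1/2)^j - 2 * (1/2)^(j + n)" if "K \<le> j" for j n
  proof (induction n)
    case (Suc n)
    have "fdist (u j) (u (j + Suc n))
        \<le> fdist (u j) (u (j + n)) + fdist (u (j + n)) (u (Suc (j + n)))"
      by (simp add: fdist_triangle fuzzy)
    also have "fdist (u (j + n)) (u (Suc (j + n))) \<le> (1/2)^(j + n)"
      using K[of "j + n"] that by simp
    finally show ?case using Suc.IH by (simp add: algebra_simps)
  qed (simp add: fdist_self)
  obtain N where N: "K \<le> N" "4 * (1/2::real)^N < e"
  proof -
    obtain j where "(1/2::real)^j < e / 4" using real_arch_pow_inv[of "e / 4" "1/2"] e by auto
    moreover have "(1/2::real)^(max K j) \<le> (1/2)^j" by (rule power_decreasing) auto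
    ultimately have "4 * (1/2::real)^(max K j) < e" by linarith
    then show ?thesis by (intro that[of "max K j"]) auto
  qed
  have close: "fdist (u N) (u m) \<le> 2 * (1/2)^N" if "N \<le> m" for m
  proof -
    have "fdist (u N) (u m) \<le> 2 * (1/2)^N - 2 * (1/2)^m"
      using tail[OF N(1), of "m - N"] that by simp
    moreover have "(0::real) \<le> (1/2)^m" by simp
    ultimately show ?thesis by linarith
  qed
  show ?thesis
  proof (intro exI[of _ N] allI impI)
    fix m n assume "N \<le> m" "N \<le> n"
    then have "fdist (u N) (u m) \<le> 2 * (1/2)^N" "fdist (u N) (u n) \<le> 2 * (1/2)^N"
      using close by auto
    moreover have "fdist (u m) (u n) \<le> fdist (u N) (u m) + fdist (u N) (u n)"
      using fdist_triangle[OF fuzzy fuzzy fuzzy] by (metis fdist_commute)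
    ultimately show "fdist (u m) (u n) < e" using N(2) by linarith
  qed
qed

lemma tendsto_lower_upper_if_fdist:
  assumes fuzzy: "\<And>k. fuzzy_number (u k)" "fuzzy_number v"
    and lim: "(\<lambda>k. fdist (u k) v) \<longlonglongrightarrow> 0" and r: "r \<in> {0..1}"
  shows "(\<lambda>k. lower (u k) r) \<longlonglongrightarrow> lower v r" "(\<lambda>k. upper (u k) r) \<longlonglongrightarrow> upper v r"
  using dist_lower_le_fdist[OF fuzzy r] dist_upper_le_fdist[OF fuzzy r] fdist_nonneg[OF fuzzy]
  by (auto intro!: metric_tendsto_imp_tendsto[OF lim] always_eventually)

lemma strongly_measurable_limit:
  assumes sm: "\<And>k. strongly_measurable a b (f k)" and G: "G \<in> sets (lebesgue_on {a..b})"
    and lim: "\<And>x. x \<in> G \<Longrightarrow> fuzzy_number (g x) \<and> (\<lambda>k. fdist (f k x) (g x)) \<longlonglongrightarrow> 0"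
    and outside: "\<And>x. x \<notin> G \<Longrightarrow> g x = fzero"
  shows "strongly_measurable a b g"
  unfolding strongly_measurable_def
proof (intro conjI ballI)
  fix x show "fuzzy_number (g x)" using lim outside fuzzy_number_fzero by (cases "x \<in> G") auto
next
  fix r :: real assume r: "r \<in> {0..1}"
  have G_sub: "G \<subseteq> {a..b}" using sets.sets_into_space[OF G] by simp
  have measurable_endpoint: "(\<lambda>x. F (g x) r) \<in> borel_measurable (lebesgue_on {a..b})"
    if F_meas: "\<And>k. (\<lambda>x. F (f k x) r) \<in> borel_measurable (lebesgue_on {a..b})"
      and F_lim: "\<And>x. x \<in> G \<Longrightarrow> (\<lambda>k. F (f k x) r) \<longlonglongrightarrow> F (g x) r"
      and F_fzero: "F fzero r = 0"
    for F :: "(real \<Rightarrow> real) \<Rightarrow> real \<Rightarrow> real"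
  proof (rule borel_measurable_LIMSEQ_metric)
    show "(\<lambda>x. if x \<in> G then F (f k x) r else 0) \<in> borel_measurable (lebesgue_on {a..b})" for k
      by (rule measurable_If_set[OF F_meas]) (use G in auto)
    show "(\<lambda>k. if x \<in> G then F (f k x) r else 0) \<longlonglongrightarrow> F (g x) r" for x
      using F_lim outside F_fzero by (cases "x \<in> G") auto
  qed
  have fuzzy_f: "fuzzy_number (f k x)" if "x \<in> G" for k x
    using that G_sub sm strongly_measurable_imp_fuzzy_number by blast
  show "(\<lambda>x. lower (g x) r) \<in> borel_measurable (lebesgue_on {a..b})"
    by (rule measurable_endpoint)
      (use sm r lim fuzzy_f tendsto_lower_upper_if_fdist(1) lower_fzero
        in \<open>auto simp: strongly_measurable_def\<close>)
  show "(\<lambda>x. upper (g x) r) \<in> borel_measurable (lebesgue_on {a..b})"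
    by (rule measurable_endpoint)
      (use sm r lim fuzzy_f tendsto_lower_upper_if_fdist(2) upper_fzero
        in \<open>auto simp: strongly_measurable_def\<close>)
qed

lemma integral_fdist_powr_less:
  assumes p: "0 < p" and "Dp p a b f g < e"
  shows "(\<integral>x. fdist (f x) (g x) powr p \<partial>lebesgue_on {a..b}) < e powr p"
proof -
  let ?I = "\<integral>x. fdist (f x) (g x) powr p \<partial>lebesgue_on {a..b}"
  have "0 \<le> ?I" by (intro integral_nonneg_AE AE_I2) simp
  then have "?I = (?I powr (1/p)) powr p" using p by (simp add: powr_powr)
  also have "\<dots> < e powr p"
    using assms by (intro powr_less_mono2) (auto simp: Dp_eq_integral)
  finally show ?thesis .
qed

lemma nn_integral_fdist_powr_le_if_AE_limit:
  assumes p: "0 < p"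
    and f: "strongly_measurable a b f" and h: "\<And>k. strongly_measurable a b (h k)"
    and g: "strongly_measurable a b g"
    and lim: "AE x in lebesgue_on {a..b}. (\<lambda>k. fdist (h k x) (g x)) \<longlonglongrightarrow> 0"
    and bound: "\<forall>\<^sub>F k in sequentially.
      (\<integral>\<^sup>+x. ennreal (fdist (f x) (h k x) powr p) \<partial>lebesgue_on {a..b}) \<le> B"
  shows "(\<integral>\<^sup>+x. ennreal (fdist (f x) (g x) powr p) \<partial>lebesgue_on {a..b}) \<le> B"
proof -
  let ?M = "lebesgue_on {a..b}"
  have [measurable]: "(\<lambda>x. fdist (f x) (h k x)) \<in> borel_measurable ?M" for k
    by (rule borel_measurable_fdist[OF f h])
  have "(\<integral>\<^sup>+x. ennreal (fdist (f x) (g x) powr p) \<partial>?M)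
      = (\<integral>\<^sup>+x. liminf (\<lambda>k. ennreal (fdist (f x) (h k x) powr p)) \<partial>?M)"
  proof (rule nn_integral_cong_AE)
    show "AE x in ?M.
        ennreal (fdist (f x) (g x) powr p) = liminf (\<lambda>k. ennreal (fdist (f x) (h k x) powr p))"
      using lim
    proof (rule AE_mp, intro AE_I2 impI)
      fix x assume "x \<in> space ?M" and lim_x: "(\<lambda>k. fdist (h k x) (g x)) \<longlonglongrightarrow> 0"
      then have x: "x \<in> {a..b}" by simp
      have fuzzy: "fuzzy_number (f x)" "fuzzy_number (g x)" "\<And>k. fuzzy_number (h k x)"
        using strongly_measurable_imp_fuzzy_number[OF f x]
          strongly_measurable_imp_fuzzy_number[OF g x]
          strongly_measurable_imp_fuzzy_number[OF h x] by auto
      have "dist (fdist (f x) (h k x)) (fdist (f x) (g x)) \<le> dist (fdist (h k x) (g x)) 0" for k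
        using fdist_triangle[OF fuzzy(1,2) fuzzy(3)[of k]]
          fdist_triangle[OF fuzzy(1) fuzzy(3)[of k] fuzzy(2)]
          fdist_nonneg[OF fuzzy(3)[of k] fuzzy(2)]
        by (simp add: dist_real_def fdist_commute[of "g x"])
      then have "(\<lambda>k. fdist (f x) (h k x)) \<longlonglongrightarrow> fdist (f x) (g x)"
        by (intro metric_tendsto_imp_tendsto[OF lim_x] always_eventually) auto
      then have "(\<lambda>k. ennreal (fdist (f x) (h k x) powr p)) \<longlonglongrightarrow> ennreal (fdist (f x) (g x) powr p)"
        using p fuzzy by (intro tendsto_ennrealI tendsto_powr') (auto simp: fdist_nonneg)
      then show "ennreal (fdist (f x) (g x) powr p)
          = liminf (\<lambda>k. ennreal (fdist (f x) (h k x) powr p))"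
        by (rule lim_imp_Liminf[OF trivial_limit_sequentially, symmetric])
    qed
  qed
  also have "\<dots> \<le> liminf (\<lambda>k. \<integral>\<^sup>+x. ennreal (fdist (f x) (h k x) powr p) \<partial>?M)"
    by (rule nn_integral_liminf) measurable
  also have "\<dots> \<le> limsup (\<lambda>k. \<integral>\<^sup>+x. ennreal (fdist (f x) (h k x) powr p) \<partial>?M)"
    by (rule Liminf_le_Limsup) simp
  also have "\<dots> \<le> B" by (rule Limsup_bounded[OF bound])
  finally show ?thesis .
qed

lemma Dp_le_if_nn_integral_le:
  assumes p: "0 < p" and e: "0 \<le> e"
    and f: "strongly_measurable a b f" and g: "strongly_measurable a b g"
    and le: "(\<integral>\<^sup>+x. ennreal (fdist (f x) (g x) powr p) \<partial>lebesgue_on {a..b}) \<le> ennreal (e powr p)"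
  shows "Dp p a b f g \<le> e"
proof -
  have "(\<integral>x. fdist (f x) (g x) powr p \<partial>lebesgue_on {a..b})
      = enn2real (\<integral>\<^sup>+x. ennreal (fdist (f x) (g x) powr p) \<partial>lebesgue_on {a..b})"
  proof (rule integral_eq_nn_integral)
    show "(\<lambda>x. fdist (f x) (g x) powr p) \<in> borel_measurable (lebesgue_on {a..b})"
      by (intro powr_real_measurable borel_measurable_fdist[OF f g] measurable_const) simp
    show "AE x in lebesgue_on {a..b}. 0 \<le> fdist (f x) (g x) powr p" by simp
  qed
  also have "\<dots> \<le> enn2real (ennreal (e powr p))" by (rule enn2real_mono[OF le]) simp
  also have "\<dots> = e powr p" by simp
  finally have "Dp p a b f g \<le> (e powr p) powr (1/p)"
    unfolding Dp_eq_integral using p by (intro powr_mono2) (auto intro!: integral_nonneg_AE AE_I2)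
  then show ?thesis using p e by (simp add: powr_powr)
qed

text \<open>Riesz--Fischer: the \<open>Dp\<close>-steps of a fast subsequence are small enough for
  Borel--Cantelli, so the subsequence is pointwise fast Cauchy almost everywhere.\<close>

lemma fuzzy_Lp_fast_subsequence:
  fixes s :: "nat \<Rightarrow> real \<Rightarrow> real \<Rightarrow> real"
  assumes p: "1 \<le> p" and s: "\<And>n. s n \<in> fuzzy_Lp p a b"
    and Cauchy: "\<And>e. 0 < e \<Longrightarrow> \<exists>N. \<forall>m\<ge>N. \<forall>n\<ge>N. Dp p a b (s m) (s n) < e"
  obtains \<phi> where "strict_mono \<phi>"
    "AE x in lebesgue_on {a..b}.
      \<forall>\<^sub>F k in sequentially. fdist (s (\<phi> k) x) (s (\<phi> (Suc k)) x) < (1/2)^k"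
proof -
  let ?M = "lebesgue_on {a..b}"
  have p0: "0 < p" using p by simp
  define t where "t k = ((1/2)^k * ((1/2::real)^k) powr p) powr (1/p)" for k
  have "0 < t k" for k unfolding t_def by simp
  then obtain \<phi> where \<phi>: "strict_mono \<phi>" "\<And>k n. \<phi> k \<le> n \<Longrightarrow> Dp p a b (s (\<phi> k)) (s n) < t k"
    using fast_subsequence[of "Dp p a b" s t] Cauchy by blast
  define D where "D k x = fdist (s (\<phi> k) x) (s (\<phi> (Suc k)) x)" for k x
  have D_meas: "D k \<in> borel_measurable ?M" for k
    unfolding D_def
    by (rule borel_measurable_fdist[OF fuzzy_Lp_imp_strongly_measurable[OF s]
          fuzzy_Lp_imp_strongly_measurable[OF s]])
  have "AE x in ?M. \<forall>\<^sub>F k in sequentially. D k x < (1/2)^k"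
  proof (rule AE_eventually_less_geometric[OF p0 D_meas])
    show "integrable ?M (\<lambda>x. D k x powr p)" for k
      unfolding D_def by (rule integrable_fdist_powr[OF p s s])
    show "(\<integral>x. D k x powr p \<partial>?M) \<le> (1/2)^k * ((1/2)^k) powr p" for k
    proof -
      have "Dp p a b (s (\<phi> k)) (s (\<phi> (Suc k))) < t k"
        by (rule \<phi>(2)) (simp add: strict_monoD[OF \<phi>(1)] less_imp_le)
      then have "(\<integral>x. D k x powr p \<partial>?M) < t k powr p"
        unfolding D_def by (rule integral_fdist_powr_less[OF p0])
      also have "t k powr p = (1/2)^k * ((1/2)^k) powr p"
        unfolding t_def using p0 by (simp add: powr_powr)
      finally show ?thesis by simp
    qed
  qed
  with \<phi>(1) show ?thesis unfolding D_def by (rule that)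
qed

lemma fuzzy_Lp_Cauchy_AE_convergent_subsequence:
  fixes s :: "nat \<Rightarrow> real \<Rightarrow> real \<Rightarrow> real"
  assumes p: "1 \<le> p" and s: "\<And>n. s n \<in> fuzzy_Lp p a b"
    and Cauchy: "\<And>e. 0 < e \<Longrightarrow> \<exists>N. \<forall>m\<ge>N. \<forall>n\<ge>N. Dp p a b (s m) (s n) < e"
  obtains \<phi> g where "strict_mono \<phi>" "strongly_measurable a b g"
    "AE x in lebesgue_on {a..b}. (\<lambda>k. fdist (s (\<phi> k) x) (g x)) \<longlonglongrightarrow> 0"
proof -
  let ?M = "lebesgue_on {a..b}"
  note sm = fuzzy_Lp_imp_strongly_measurable[OF s]
  obtain \<phi> where \<phi>: "strict_mono \<phi>"
    and fast: "AE x in ?M. \<forall>\<^sub>F k in sequentially. fdist (s (\<phi> k) x) (s (\<phi> (Suc k)) x) < (1/2)^k"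
    using fuzzy_Lp_fast_subsequence[OF p s Cauchy] by blast
  have [measurable]: "(\<lambda>x. fdist (s (\<phi> k) x) (s (\<phi> (Suc k)) x)) \<in> borel_measurable ?M" for k
    by (rule borel_measurable_fdist[OF sm sm])
  define G where "G = {x \<in> space ?M. \<exists>K. \<forall>k\<ge>K. fdist (s (\<phi> k) x) (s (\<phi> (Suc k)) x) < (1/2)^k}"
  have AE_G: "AE x in ?M. x \<in> G"
    using fast by (auto elim!: AE_mp intro!: AE_I2 simp: G_def eventually_sequentially)
  have G_sets: "G \<in> sets ?M" unfolding G_def by measurable
  have limit: "\<exists>v. fuzzy_number v \<and> (\<lambda>k. fdist (s (\<phi> k) x) v) \<longlonglongrightarrow> 0" if "x \<in> G" for x
  proof (rule fuzzy_number_Cauchy_limit)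
    have x: "x \<in> {a..b}" using that by (simp add: G_def)
    show fuzzy: "fuzzy_number (s (\<phi> k) x)" for k
      by (rule strongly_measurable_imp_fuzzy_number[OF sm x])
    have "\<forall>\<^sub>F k in sequentially. fdist (s (\<phi> k) x) (s (\<phi> (Suc k)) x) < (1/2)^k"
      using that by (auto simp: G_def eventually_sequentially)
    then show "\<exists>N. \<forall>m\<ge>N. \<forall>n\<ge>N. fdist (s (\<phi> m) x) (s (\<phi> n) x) < e" if "0 < e" for e
      by (rule fdist_Cauchy_if_geometric[OF fuzzy _ that])
  qed
  define g where "g x = (if x \<in> G then SOME v. fuzzy_number v \<and> (\<lambda>k. fdist (s (\<phi> k) x) v) \<longlonglongrightarrow> 0
    else fzero)" for x
  have g_lim: "fuzzy_number (g x) \<and> (\<lambda>k. fdist (s (\<phi> k) x) (g x)) \<longlonglongrightarrow> 0" if "x \<in> G" for x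
    using someI_ex[OF limit[OF that]] that by (simp add: g_def)
  have "strongly_measurable a b g"
  proof (rule strongly_measurable_limit[OF _ G_sets])
    show "strongly_measurable a b (s (\<phi> k))" for k by (rule sm)
    show "fuzzy_number (g x) \<and> (\<lambda>k. fdist (s (\<phi> k) x) (g x)) \<longlonglongrightarrow> 0" if "x \<in> G" for x
      by (rule g_lim[OF that])
    show "g x = fzero" if "x \<notin> G" for x
      using that unfolding g_def by simp
  qed
  moreover have "AE x in ?M. (\<lambda>k. fdist (s (\<phi> k) x) (g x)) \<longlonglongrightarrow> 0"
    using AE_G by (rule AE_mp) (intro AE_I2 impI, rule g_lim[THEN conjunct2])
  ultimately show ?thesis using \<phi> that by blast
qed

lemma nn_integral_fdist_powr_le_if_Cauchy:
  fixes s :: "nat \<Rightarrow> real \<Rightarrow> real \<Rightarrow> real"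
  assumes p: "1 \<le> p" and s: "\<And>n. s n \<in> fuzzy_Lp p a b"
    and N: "\<And>m n. N \<le> m \<Longrightarrow> N \<le> n \<Longrightarrow> Dp p a b (s m) (s n) < e"
    and \<phi>: "strict_mono \<phi>" and g: "strongly_measurable a b g"
    and lim: "AE x in lebesgue_on {a..b}. (\<lambda>k. fdist (s (\<phi> k) x) (g x)) \<longlonglongrightarrow> 0"
    and n: "N \<le> n"
  shows "(\<integral>\<^sup>+x. ennreal (fdist (s n x) (g x) powr p) \<partial>lebesgue_on {a..b}) \<le> ennreal (e powr p)"
proof (rule nn_integral_fdist_powr_le_if_AE_limit[OF _ _ _ g lim])
  show "0 < p" using p by simp
  show "strongly_measurable a b (s n)" "strongly_measurable a b (s (\<phi> k))" for k
    by (rule fuzzy_Lp_imp_strongly_measurable[OF s])+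
  show "\<forall>\<^sub>F k in sequentially.
      (\<integral>\<^sup>+x. ennreal (fdist (s n x) (s (\<phi> k) x) powr p) \<partial>lebesgue_on {a..b}) \<le> ennreal (e powr p)"
    using eventually_ge_at_top[of N]
  proof (rule eventually_mono)
    fix k assume "N \<le> k"
    then have "N \<le> \<phi> k" using seq_suble[OF \<phi>, of k] by simp
    then have "(\<integral>x. fdist (s n x) (s (\<phi> k) x) powr p \<partial>lebesgue_on {a..b}) < e powr p"
      using N n p by (intro integral_fdist_powr_less) auto
    moreover have "(\<integral>\<^sup>+x. ennreal (fdist (s n x) (s (\<phi> k) x) powr p) \<partial>lebesgue_on {a..b})
        = ennreal (\<integral>x. fdist (s n x) (s (\<phi> k) x) powr p \<partial>lebesgue_on {a..b})"
      by (rule nn_integral_eq_integral[OF integrable_fdist_powr[OF p s s]]) simp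
    ultimately show "(\<integral>\<^sup>+x. ennreal (fdist (s n x) (s (\<phi> k) x) powr p) \<partial>lebesgue_on {a..b})
        \<le> ennreal (e powr p)"
      by simp
  qed
qed

lemma fuzzy_Lp_if_nn_integral_fdist_finite:
  assumes p: "1 \<le> p" and f: "f \<in> fuzzy_Lp p a b" and g: "strongly_measurable a b g"
    and finite: "(\<integral>\<^sup>+x. ennreal (fdist (f x) (g x) powr p) \<partial>lebesgue_on {a..b}) < \<infinity>"
  shows "g \<in> fuzzy_Lp p a b"
proof -
  let ?M = "lebesgue_on {a..b}"
  note sm = fuzzy_Lp_imp_strongly_measurable[OF f]
  have [measurable]: "(\<lambda>x. fdist fzero (f x)) \<in> borel_measurable ?M"
    "(\<lambda>x. fdist (f x) (g x)) \<in> borel_measurable ?M" "(\<lambda>x. fdist fzero (g x)) \<in> borel_measurable ?M"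
    using borel_measurable_fdist strongly_measurable_const[OF fuzzy_number_fzero] sm g by blast+
  have int: "integrable ?M (\<lambda>x. fdist (f x) (g x) powr p)"
  proof (subst integrable_on_iff_nn_integral)
    show "(\<lambda>x. fdist (f x) (g x) powr p) \<in> borel_measurable ?M" by measurable
    show "(\<integral>\<^sup>+x\<in>{a..b}. ennreal (fdist (f x) (g x) powr p) \<partial>lebesgue) < \<infinity>"
      using finite unfolding nn_integral_on_atLeastAtMost .
  qed simp
  have "integrable ?M (\<lambda>x. fdist fzero (g x) powr p)"
  proof (rule integrable_powr_le_add[OF p,
        where f = "\<lambda>x. fdist fzero (f x)" and g = "\<lambda>x. fdist (f x) (g x)"])
    show "integrable ?M (\<lambda>x. fdist fzero (f x) powr p)" using f by (simp add: fuzzy_Lp_iff)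
    show "integrable ?M (\<lambda>x. fdist (f x) (g x) powr p)" by (rule int)
    fix x assume "x \<in> space ?M"
    then have "x \<in> {a..b}" by simp
    then have "fuzzy_number (f x)" "fuzzy_number (g x)"
      using strongly_measurable_imp_fuzzy_number[OF sm] strongly_measurable_imp_fuzzy_number[OF g]
      by auto
    then show "0 \<le> fdist fzero (f x) \<and> 0 \<le> fdist (f x) (g x) \<and> 0 \<le> fdist fzero (g x)"
      and "fdist fzero (g x) \<le> fdist fzero (f x) + fdist (f x) (g x)"
      by (simp_all add: fdist_nonneg fdist_triangle fuzzy_number_fzero)
  qed simp_all
  with g show ?thesis by (simp add: fuzzy_Lp_iff)
qed

lemma fuzzy_Lp_limit_if_AE_convergent_subsequence:
  fixes s :: "nat \<Rightarrow> real \<Rightarrow> real \<Rightarrow> real"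
  assumes p: "1 \<le> p" and s: "\<And>n. s n \<in> fuzzy_Lp p a b"
    and Cauchy: "\<And>e. 0 < e \<Longrightarrow> \<exists>N. \<forall>m\<ge>N. \<forall>n\<ge>N. Dp p a b (s m) (s n) < e"
    and \<phi>: "strict_mono \<phi>" and g: "strongly_measurable a b g"
    and lim: "AE x in lebesgue_on {a..b}. (\<lambda>k. fdist (s (\<phi> k) x) (g x)) \<longlonglongrightarrow> 0"
  shows "g \<in> fuzzy_Lp p a b" "(\<lambda>n. Dp p a b (s n) g) \<longlonglongrightarrow> 0"
proof -
  have close: "\<exists>N. \<forall>n\<ge>N.
      (\<integral>\<^sup>+x. ennreal (fdist (s n x) (g x) powr p) \<partial>lebesgue_on {a..b}) \<le> ennreal (e powr p)"
    if e: "0 < e" for e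
  proof -
    obtain N where N: "\<And>m n. N \<le> m \<Longrightarrow> N \<le> n \<Longrightarrow> Dp p a b (s m) (s n) < e"
      using Cauchy[OF e] by blast
    have bound:
      "(\<integral>\<^sup>+x. ennreal (fdist (s n x) (g x) powr p) \<partial>lebesgue_on {a..b}) \<le> ennreal (e powr p)"
      if "N \<le> n" for n
      by (rule nn_integral_fdist_powr_le_if_Cauchy[OF p s N \<phi> g lim that])
    show ?thesis by (intro exI[of _ N] allI impI bound)
  qed
  obtain N where N: "\<forall>n\<ge>N. (\<integral>\<^sup>+x. ennreal (fdist (s n x) (g x) powr p) \<partial>lebesgue_on {a..b})
      \<le> ennreal (1 powr p)"
    using close[OF zero_less_one] by blast
  have "(\<integral>\<^sup>+x. ennreal (fdist (s N x) (g x) powr p) \<partial>lebesgue_on {a..b}) < \<infinity>"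
    using N[rule_format, OF order_refl] by (rule order.strict_trans1) simp
  then show "g \<in> fuzzy_Lp p a b" by (rule fuzzy_Lp_if_nn_integral_fdist_finite[OF p s g])
  show "(\<lambda>n. Dp p a b (s n) g) \<longlonglongrightarrow> 0"
  proof (rule tendstoI)
    fix e :: real assume "0 < e"
    then obtain N where N: "\<And>n. N \<le> n \<Longrightarrow>
        (\<integral>\<^sup>+x. ennreal (fdist (s n x) (g x) powr p) \<partial>lebesgue_on {a..b}) \<le> ennreal ((e / 2) powr p)"
      using close[of "e / 2"] by auto
    have small: "Dp p a b (s n) g \<le> e / 2" if "N \<le> n" for n
      using p \<open>0 < e\<close>
      by (intro Dp_le_if_nn_integral_le[OF _ _ fuzzy_Lp_imp_strongly_measurable[OF s] g N[OF that]])
        auto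
    show "\<forall>\<^sub>F n in sequentially. dist (Dp p a b (s n) g) 0 < e"
      unfolding eventually_sequentially
    proof (intro exI[of _ N] allI impI)
      fix n assume "N \<le> n"
      then have "Dp p a b (s n) g \<le> e / 2" by (rule small)
      then show "dist (Dp p a b (s n) g) 0 < e"
        using \<open>0 < e\<close> Dp_nonneg[of p a b "s n" g] by simp
    qed
  qed
qed

lemma nn_integral_fdist_powr_finite:
  assumes p: "1 \<le> p" and f: "f \<in> fuzzy_Lp p a b" and g: "g \<in> fuzzy_Lp p a b"
  shows "(\<integral>\<^sup>+ x\<in>{a..b}. ennreal (fdist (f x) (g x) powr p) \<partial>lebesgue) < \<infinity>"
proof (subst integrable_on_iff_nn_integral[symmetric])
  show "(\<lambda>x. fdist (f x) (g x) powr p) \<in> borel_measurable (lebesgue_on {a..b})"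
    by (intro powr_real_measurable measurable_const borel_measurable_fdist
        fuzzy_Lp_imp_strongly_measurable[OF f] fuzzy_Lp_imp_strongly_measurable[OF g]) simp
qed (simp_all add: integrable_fdist_powr[OF p f g])

lemma Dp_triangle:
  assumes p: "1 \<le> p" and f: "f \<in> fuzzy_Lp p a b" and g: "g \<in> fuzzy_Lp p a b"
    and h: "h \<in> fuzzy_Lp p a b"
  shows "Dp p a b f h \<le> Dp p a b f g + Dp p a b g h"
proof (rule Dp_le_add[OF p f g g h])
  fix x assume "x \<in> {a..b}"
  then show "fdist (f x) (h x) \<le> fdist (f x) (g x) + fdist (g x) (h x)"
    using f g h
    by (intro fdist_triangle strongly_measurable_imp_fuzzy_number fuzzy_Lp_imp_strongly_measurable)
qed (use f h in \<open>simp_all add: fuzzy_Lp_imp_strongly_measurable\<close>)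

lemma Dp_ffadd_le:
  assumes p: "1 \<le> p" and f: "f \<in> fuzzy_Lp p a b" and g: "g \<in> fuzzy_Lp p a b"
    and h: "h \<in> fuzzy_Lp p a b" and e: "e \<in> fuzzy_Lp p a b"
  shows "Dp p a b (ffadd f g) (ffadd h e) \<le> Dp p a b f h + Dp p a b g e"
proof (rule Dp_le_add[OF p f h g e])
  note sm = fuzzy_Lp_imp_strongly_measurable[OF f] fuzzy_Lp_imp_strongly_measurable[OF g]
    fuzzy_Lp_imp_strongly_measurable[OF h] fuzzy_Lp_imp_strongly_measurable[OF e]
  show "strongly_measurable a b (ffadd f g)" "strongly_measurable a b (ffadd h e)"
    by (intro strongly_measurable_ffadd sm)+
  fix x assume x: "x \<in> {a..b}"
  show "fdist (ffadd f g x) (ffadd h e x) \<le> fdist (f x) (h x) + fdist (g x) (e x)"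
    unfolding ffadd_def
    by (intro fdist_fadd_le strongly_measurable_imp_fuzzy_number[OF sm(1) x]
        strongly_measurable_imp_fuzzy_number[OF sm(2) x]
        strongly_measurable_imp_fuzzy_number[OF sm(3) x]
        strongly_measurable_imp_fuzzy_number[OF sm(4) x])
qed

lemma fuzzy_Lp_complete:
  fixes s :: "nat \<Rightarrow> real \<Rightarrow> real \<Rightarrow> real"
  assumes "1 \<le> p" "\<And>n. s n \<in> fuzzy_Lp p a b"
    and "\<And>e. 0 < e \<Longrightarrow> \<exists>N. \<forall>m\<ge>N. \<forall>n\<ge>N. Dp p a b (s m) (s n) < e"
  shows "\<exists>g\<in>fuzzy_Lp p a b. (\<lambda>n. Dp p a b (s n) g) \<longlonglongrightarrow> 0"
proof -
  obtain \<phi> g where "strict_mono \<phi>" "strongly_measurable a b g"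
    "AE x in lebesgue_on {a..b}. (\<lambda>k. fdist (s (\<phi> k) x) (g x)) \<longlonglongrightarrow> 0"
    using fuzzy_Lp_Cauchy_AE_convergent_subsequence[OF assms] by blast
  from fuzzy_Lp_limit_if_AE_convergent_subsequence[OF assms this] show ?thesis by blast
qed

theorem theorem2p6:
  fixes a b :: real
  shows
  "(\<forall>f. strongly_measurable a b f \<longrightarrow>
        (\<lambda>x. fdist fzero (f x)) \<in> borel_measurable (restrict_space lebesgue {a..b}))
   \<and>
   (\<forall>p::real. 1 \<le> p \<longrightarrow>
      (\<forall>f\<in>fuzzy_Lp p a b. \<forall>g\<in>fuzzy_Lp p a b.
          (\<lambda>x. fdist (f x) (g x)) \<in> borel_measurable (restrict_space lebesgue {a..b}) \<and>
          (\<integral>\<^sup>+ x\<in>{a..b}. ennreal (fdist (f x) (g x) powr p) \<partial>lebesgue) < \<infinity>)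
    \<and> (\<forall>f\<in>fuzzy_Lp p a b. Dp p a b f f = 0)
    \<and> (\<forall>f\<in>fuzzy_Lp p a b. \<forall>g\<in>fuzzy_Lp p a b. 0 \<le> Dp p a b f g)
    \<and> (\<forall>f\<in>fuzzy_Lp p a b. \<forall>g\<in>fuzzy_Lp p a b.
          Dp p a b f g = 0 \<longleftrightarrow> (AE x in lebesgue. x \<in> {a..b} \<longrightarrow> f x = g x))
    \<and> (\<forall>f\<in>fuzzy_Lp p a b. \<forall>g\<in>fuzzy_Lp p a b. Dp p a b f g = Dp p a b g f)
    \<and> (\<forall>f\<in>fuzzy_Lp p a b. \<forall>g\<in>fuzzy_Lp p a b. \<forall>h\<in>fuzzy_Lp p a b.
          Dp p a b f h \<le> Dp p a b f g + Dp p a b g h)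
    \<and> (\<forall>s. (\<forall>n. s n \<in> fuzzy_Lp p a b) \<longrightarrow>
          (\<forall>e>0. \<exists>N. \<forall>m\<ge>N. \<forall>n\<ge>N. Dp p a b (s m) (s n) < e) \<longrightarrow>
          (\<exists>g\<in>fuzzy_Lp p a b. (\<lambda>n. Dp p a b (s n) g) \<longlonglongrightarrow> 0))
    \<and> (\<forall>f\<in>fuzzy_Lp p a b. \<forall>g\<in>fuzzy_Lp p a b. \<forall>h\<in>fuzzy_Lp p a b.
          Dp p a b (ffadd f h) (ffadd g h) = Dp p a b f g)
    \<and> (\<forall>f\<in>fuzzy_Lp p a b. \<forall>g\<in>fuzzy_Lp p a b. \<forall>c::real.
          Dp p a b (ffscale c f) (ffscale c g) = \<bar>c\<bar> * Dp p a b f g)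
    \<and> (\<forall>f\<in>fuzzy_Lp p a b. \<forall>g\<in>fuzzy_Lp p a b. \<forall>h\<in>fuzzy_Lp p a b. \<forall>e\<in>fuzzy_Lp p a b.
          Dp p a b (ffadd f g) (ffadd h e) \<le> Dp p a b f h + Dp p a b g e))"
proof (intro conjI allI impI ballI)
  fix f assume "strongly_measurable a b f"
  then show "(\<lambda>x. fdist fzero (f x)) \<in> borel_measurable (restrict_space lebesgue {a..b})"
    by (rule borel_measurable_fdist[OF strongly_measurable_const[OF fuzzy_number_fzero]])
next
  fix p :: real and f g assume p: "1 \<le> p" and f: "f \<in> fuzzy_Lp p a b" and g: "g \<in> fuzzy_Lp p a b"
  show "(\<lambda>x. fdist (f x) (g x)) \<in> borel_measurable (restrict_space lebesgue {a..b})"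
    by (intro borel_measurable_fdist fuzzy_Lp_imp_strongly_measurable[OF f]
        fuzzy_Lp_imp_strongly_measurable[OF g])
  show "(\<integral>\<^sup>+ x\<in>{a..b}. ennreal (fdist (f x) (g x) powr p) \<partial>lebesgue) < \<infinity>"
    by (rule nn_integral_fdist_powr_finite[OF p f g])
  show "Dp p a b f g = 0 \<longleftrightarrow> (AE x in lebesgue. x \<in> {a..b} \<longrightarrow> f x = g x)"
    by (rule Dp_eq_0_iff[OF p f g])
  show "Dp p a b (ffscale c f) (ffscale c g) = \<bar>c\<bar> * Dp p a b f g" for c
    using p
    by (intro Dp_ffscale fuzzy_Lp_imp_strongly_measurable[OF f]
        fuzzy_Lp_imp_strongly_measurable[OF g]) simp
next
  fix p :: real and f g h e
  assume p: "1 \<le> p" and f: "f \<in> fuzzy_Lp p a b" and g: "g \<in> fuzzy_Lp p a b"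
    and h: "h \<in> fuzzy_Lp p a b" and e: "e \<in> fuzzy_Lp p a b"
  show "Dp p a b f h \<le> Dp p a b f g + Dp p a b g h" by (rule Dp_triangle[OF p f g h])
  show "Dp p a b (ffadd f g) (ffadd h e) \<le> Dp p a b f h + Dp p a b g e"
    by (rule Dp_ffadd_le[OF p f g h e])
  show "Dp p a b (ffadd f h) (ffadd g h) = Dp p a b f g"
    by (intro Dp_ffadd_cancel fuzzy_Lp_imp_strongly_measurable[OF f]
        fuzzy_Lp_imp_strongly_measurable[OF g]
        fuzzy_Lp_imp_strongly_measurable[OF h])
next
  fix p :: real and s :: "nat \<Rightarrow> real \<Rightarrow> real \<Rightarrow> real"
  assume "1 \<le> p" "\<forall>n. s n \<in> fuzzy_Lp p a b" "\<forall>e>0. \<exists>N. \<forall>m\<ge>N. \<forall>n\<ge>N. Dp p a b (s m) (s n) < e"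
  then show "\<exists>g\<in>fuzzy_Lp p a b. (\<lambda>n. Dp p a b (s n) g) \<longlonglongrightarrow> 0"
    by (intro fuzzy_Lp_complete) auto
qed (simp_all add: Dp_self Dp_nonneg Dp_commute)

end
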